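(* Suppose Assumptions (A1), (A2), (A3) hold and let $x\in\mathcal{X}$. (1) If Assumption (SC) holds, then: if $x$ is an SCSC point, then $\nabla_x y^*(x)$ exists; the converse fails in general (there are problems satisfying these assumptions and points $x$ at which $\nabla_x y^*(x)$ exists but $x$ is not an SCSC point). (2) If Assumption (LIN) holds, then the following are equivalent: (a) $x$ is an SCSC point; (b) $y^*(x)$ is a single point; (c) $\nabla_x y^*(x)$ exists.
   Context: Let $f,g,h_1,\dots,h_k:\mathbb{R}^n\times\mathbb{R}^m\to\mathbb{R}$ and $\mathcal{X}\subseteq\mathbb{R}^n$. For $x\in\mathcal{X}$ let $\mathcal{Y}(x)=\{y: h_i(x,y)\le 0,\ i=1,\dots,k\}$ and $y^*(x)=\arg\min_{y\in\mathcal{Y}(x)} g(x,y)$ (a set-valued map in general; "$\nabla_x y^*(x)$ exists" means $y^*$ is single-valued near $x$ and differentiable at $x$). Assumptions: (A1) $f$ is once and $g,h_i$ twice continuously differentiable; (A2) $\mathcal{X}$ is convex and compact and for every $x\in\mathcal{X}$ there is $y$ with $h_i(x,y)<0$ for all $i$; (A3) (LICQ) for every $x\in\mathcal{X}$ and $y\in y^*(x)$, the gradients $\{\nabla_y h_i(x,y): h_i(x,y)=0\}$ are linearly independent; (SC) for every $x\in\mathcal{X}$, $g(x,\cdot)$ is $\mu_g$-strongly convex and each $h_i(x,\cdot)$ is convex; (LIN) for every $x\in\mathcal{X}$, $g(x,\cdot)$ and all $h_i(x,\cdot)$ are linear (affine) in $y$ and $\mathcal{Y}(x)$ is compact. For $y\in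 y^*(x)$ let $\lambda_i(x,y)\ge0$ be the optimal KKT multiplier of the $i$-th constraint. $x$ is an SCSC point if for every $y\in y^*(x)$ and every $i$, $h_i(x,y)=0$ implies $\lambda_i(x,y)>0$. *)

theory Defs
  imports "HOL-Analysis.Analysis"
begin

definition C1_fun :: "('p::euclidean_space \<Rightarrow> real) \<Rightarrow> bool" where
  "C1_fun F \<longleftrightarrow> (\<exists>F'. (\<forall>z. (F has_derivative blinfun_apply (F' z)) (at z)) \<and> continuous_on UNIV F')"

definition C2_fun :: "('p::euclidean_space \<Rightarrow> real) \<Rightarrow> bool" where
  "C2_fun F \<longleftrightarrow> (\<exists>F' F''. (\<forall>z. (F has_derivative blinfun_apply (F' z)) (at z)) \<and>
      (\<forall>z. (F' has_derivative blinfun_apply (F'' z)) (at z)) \<and> continuous_on UNIV F'')"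

definition strongly_convex :: "real \<Rightarrow> ('b::real_normed_vector \<Rightarrow> real) \<Rightarrow> bool" where
  "strongly_convex \<mu> \<phi> \<longleftrightarrow> \<mu> > 0 \<and> (\<forall>a b t. 0 \<le> t \<and> t \<le> 1 \<longrightarrow>
     \<phi> (t *\<^sub>R a + (1 - t) *\<^sub>R b) \<le> t * \<phi> a + (1 - t) * \<phi> b - \<mu> / 2 * t * (1 - t) * (norm (a - b))\<^sup>2)"

definition affine_fun :: "('b::real_vector \<Rightarrow> real) \<Rightarrow> bool" where
  "affine_fun \<phi> \<longleftrightarrow> (\<exists>l c. linear l \<and> (\<forall>y. \<phi> y = l y + c))"

text \<open>Constraints are indexed by i < k (i.e. h_1..h_k).\<close>
definition Yset :: "(nat \<Rightarrow> 'a \<Rightarrow> 'b \<Rightarrow> real) \<Rightarrow> nat \<Rightarrow> 'a \<Rightarrow> 'b set" where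
  "Yset h k x = {y. \<forall>i<k. h i x y \<le> 0}"

definition ystar :: "('a \<Rightarrow> 'b \<Rightarrow> real) \<Rightarrow> (nat \<Rightarrow> 'a \<Rightarrow> 'b \<Rightarrow> real) \<Rightarrow> nat \<Rightarrow> 'a \<Rightarrow> 'b set" where
  "ystar g h k x = {y \<in> Yset h k x. \<forall>y'\<in>Yset h k x. g x y \<le> g x y'}"

text \<open>LICQ at (x,y): gradients in y of the active constraints are linearly independent
  (gradients represented by the Frechet derivatives in y, i.e. linear functionals).\<close>
definition LICQ :: "(nat \<Rightarrow> 'a \<Rightarrow> 'b::euclidean_space \<Rightarrow> real) \<Rightarrow> nat \<Rightarrow> 'a \<Rightarrow> 'b \<Rightarrow> bool" where
  "LICQ h k x y \<longleftrightarrow> (\<forall>c::nat \<Rightarrow> real.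
     (\<forall>v. (\<Sum>i\<in>{i. i < k \<and> h i x y = 0}. c i * frechet_derivative (h i x) (at y) v) = 0)
     \<longrightarrow> (\<forall>i. i < k \<and> h i x y = 0 \<longrightarrow> c i = 0))"

definition KKT_mult :: "('a \<Rightarrow> 'b::euclidean_space \<Rightarrow> real) \<Rightarrow> (nat \<Rightarrow> 'a \<Rightarrow> 'b \<Rightarrow> real) \<Rightarrow> nat
    \<Rightarrow> 'a \<Rightarrow> 'b \<Rightarrow> (nat \<Rightarrow> real) \<Rightarrow> bool" where
  "KKT_mult g h k x y lam \<longleftrightarrow> (\<forall>i\<ge>k. lam i = 0) \<and> (\<forall>i<k. lam i \<ge> 0 \<and> lam i * h i x y = 0) \<and>
     (\<forall>v. frechet_derivative (g x) (at y) v + (\<Sum>i<k. lam i * frechet_derivative (h i x) (at y) v) = 0)"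

text \<open>The (unique, under LICQ) optimal KKT multiplier lambda(x,y).\<close>
definition kkt_lambda :: "('a \<Rightarrow> 'b::euclidean_space \<Rightarrow> real) \<Rightarrow> (nat \<Rightarrow> 'a \<Rightarrow> 'b \<Rightarrow> real) \<Rightarrow> nat
    \<Rightarrow> 'a \<Rightarrow> 'b \<Rightarrow> nat \<Rightarrow> real" where
  "kkt_lambda g h k x y = (THE lam. KKT_mult g h k x y lam)"

definition SCSC_point :: "('a \<Rightarrow> 'b::euclidean_space \<Rightarrow> real) \<Rightarrow> (nat \<Rightarrow> 'a \<Rightarrow> 'b \<Rightarrow> real) \<Rightarrow> nat \<Rightarrow> 'a \<Rightarrow> bool" where
  "SCSC_point g h k x \<longleftrightarrow> (\<forall>y\<in>ystar g h k x. \<forall>i<k. h i x y = 0 \<longrightarrow> kkt_lambda g h k x y i > 0)"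

text \<open>"nabla_x y^*(x) exists": y^* is single-valued on a neighbourhood of x (relative to the
  domain X on which y^* is defined) and the resulting function is differentiable at x.\<close>
definition grad_ystar_exists :: "('a::euclidean_space \<Rightarrow> 'b::euclidean_space \<Rightarrow> real) \<Rightarrow> (nat \<Rightarrow> 'a \<Rightarrow> 'b \<Rightarrow> real)
    \<Rightarrow> nat \<Rightarrow> 'a set \<Rightarrow> 'a \<Rightarrow> bool" where
  "grad_ystar_exists g h k X x \<longleftrightarrow> (\<exists>e>0. \<exists>\<phi>. (\<forall>x'\<in>X \<inter> ball x e. ystar g h k x' = {\<phi> x'}) \<and>
      \<phi> differentiable (at x within X))"

definition A1 :: "('a::euclidean_space \<Rightarrow> 'b::euclidean_space \<Rightarrow> real) \<Rightarrow> ('a \<Rightarrow> 'b \<Rightarrow> real)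
    \<Rightarrow> (nat \<Rightarrow> 'a \<Rightarrow> 'b \<Rightarrow> real) \<Rightarrow> nat \<Rightarrow> bool" where
  "A1 f g h k \<longleftrightarrow> C1_fun (case_prod f) \<and> C2_fun (case_prod g) \<and> (\<forall>i<k. C2_fun (case_prod (h i)))"

definition A2 :: "(nat \<Rightarrow> 'a::euclidean_space \<Rightarrow> 'b::euclidean_space \<Rightarrow> real) \<Rightarrow> nat \<Rightarrow> 'a set \<Rightarrow> bool" where
  "A2 h k X \<longleftrightarrow> convex X \<and> compact X \<and> (\<forall>x\<in>X. \<exists>y. \<forall>i<k. h i x y < 0)"

definition A3 :: "('a::euclidean_space \<Rightarrow> 'b::euclidean_space \<Rightarrow> real) \<Rightarrow> (nat \<Rightarrow> 'a \<Rightarrow> 'b \<Rightarrow> real)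
    \<Rightarrow> nat \<Rightarrow> 'a set \<Rightarrow> bool" where
  "A3 g h k X \<longleftrightarrow> (\<forall>x\<in>X. \<forall>y\<in>ystar g h k x. LICQ h k x y)"

definition SC :: "('a::euclidean_space \<Rightarrow> 'b::euclidean_space \<Rightarrow> real) \<Rightarrow> (nat \<Rightarrow> 'a \<Rightarrow> 'b \<Rightarrow> real)
    \<Rightarrow> nat \<Rightarrow> 'a set \<Rightarrow> bool" where
  "SC g h k X \<longleftrightarrow> (\<exists>\<mu>. \<forall>x\<in>X. strongly_convex \<mu> (g x) \<and> (\<forall>i<k. convex_on UNIV (h i x)))"

definition LIN :: "('a::euclidean_space \<Rightarrow> 'b::euclidean_space \<Rightarrow> real) \<Rightarrow> (nat \<Rightarrow> 'a \<Rightarrow> 'b \<Rightarrow> real)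
    \<Rightarrow> nat \<Rightarrow> 'a set \<Rightarrow> bool" where
  "LIN g h k X \<longleftrightarrow> (\<forall>x\<in>X. affine_fun (g x) \<and> (\<forall>i<k. affine_fun (h i x)) \<and> compact (Yset h k x))"

end

theory Submission
  imports Defs
begin

text \<open>Under (SC), at an SCSC point the unique lower-level solution \<open>y\<^sub>0\<close> has an active set \<open>A\<close>
  with positive multipliers. The KKT system of the problem that keeps exactly the constraints in
  \<open>A\<close>, as equalities, is a square system in \<open>(y, \<lambda>)\<close>; its Jacobian is invertible by LICQ and
  because strong convexity makes the Hessian of the Lagrangian definite on the tangent space. The
  inverse function theorem yields a differentiable branch \<open>Y(x)\<close>, \<open>\<Lambda>(x)\<close>, which by continuity keeps
  the active set and the signs of the multipliers; by convexity \<open>Y(x)\<close> solves the lower-level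
  problem, and by strong convexity it is its only solution. The problem \<open>min y\<^sup>2\<close>, \<open>y \<ge> 0\<close> shows that
  the converse fails.

  Under (LIN) the Hessian vanishes, and the same construction works when the active gradients span
  the whole space. A unique solution provides this, as well as strict complementarity: a vector
  annihilated by all active gradients, or one dual to an active gradient whose multiplier vanishes,
  would give a feasible direction along which the affine objective does not increase, so the
  solution set would not be a single point. Conversely, under strict complementarity every solution
  \<open>z\<close> forces all other solutions onto the face cut out by the constraints active at \<open>z\<close>; following
  the line through two distinct solutions to the first point where a new constraint becomes active
  contradicts this.\<close>

section \<open>Linear algebra\<close>

definition independent_family :: "'i set \<Rightarrow> ('i \<Rightarrow> 'v::real_vector) \<Rightarrow> bool" where
  "independent_family I a \<longleftrightarrow> (\<forall>c. (\<Sum>i\<in>I. c i *\<^sub>R a i) = 0 \<longrightarrow> (\<forall>i\<in>I. c i = 0))"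

lemma independent_familyD:
  "independent_family I a \<Longrightarrow> (\<Sum>i\<in>I. c i *\<^sub>R a i) = 0 \<Longrightarrow> i \<in> I \<Longrightarrow> c i = 0"
  unfolding independent_family_def by blast

lemma span_image_sum_representation:
  fixes a :: "'i \<Rightarrow> 'v::real_vector"
  assumes "finite I" "v \<in> span (a ` I)"
  obtains c where "v = (\<Sum>i\<in>I. c i *\<^sub>R a i)"
proof -
  let ?P = "{v. \<exists>c. v = (\<Sum>i\<in>I. c i *\<^sub>R a i)}"
  have "subspace ?P"
    unfolding subspace_def
  proof (intro conjI ballI allI)
    show "0 \<in> ?P" by (auto intro!: exI[of _ "\<lambda>_. 0"])
  next
    fix x y assume "x \<in> ?P" "y \<in> ?P"
    then obtain c1 c2 where "x = (\<Sum>i\<in>I. c1 i *\<^sub>R a i)" "y = (\<Sum>i\<in>I. c2 i *\<^sub>R a i)" by auto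
    then show "x + y \<in> ?P"
      by (auto intro!: exI[of _ "\<lambda>i. c1 i + c2 i"] simp: sum.distrib scaleR_add_left)
  next
    fix r :: real and x assume "x \<in> ?P"
    then obtain c where "x = (\<Sum>i\<in>I. c i *\<^sub>R a i)" by auto
    then show "r *\<^sub>R x \<in> ?P"
      by (auto intro!: exI[of _ "\<lambda>i. r * c i"] simp: scaleR_sum_right)
  qed
  moreover have "a ` I \<subseteq> ?P"
  proof
    fix w assume "w \<in> a ` I"
    then obtain j where j: "j \<in> I" "w = a j" by auto
    have "(\<Sum>i\<in>I. (if i = j then 1 else 0) *\<^sub>R a i) = a j"
      using assms(1) j(1) by (simp add: if_distrib[of "\<lambda>t. t *\<^sub>R _"] sum.delta cong: if_cong)
    then show "w \<in> ?P" using j by (auto intro!: exI[of _ "\<lambda>i. if i = j then 1 else 0"])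
  qed
  ultimately have "span (a ` I) \<subseteq> ?P" by (rule span_minimal[rotated])
  then show ?thesis using assms(2) that by auto
qed

lemma independent_family_dual_vector:
  fixes a :: "'i \<Rightarrow> 'v::euclidean_space"
  assumes fin: "finite I" and j: "j \<in> I" and ind: "independent_family I a"
  obtains d where "a j \<bullet> d = 1" "\<And>i. i \<in> I - {j} \<Longrightarrow> a i \<bullet> d = 0"
proof -
  obtain p r where p: "p \<in> span (a ` (I - {j}))"
    and r: "\<And>w. w \<in> span (a ` (I - {j})) \<Longrightarrow> orthogonal r w" and e: "a j = p + r"
    using orthogonal_subspace_decomp_exists by blast
  have "r \<noteq> 0"
  proof
    assume "r = 0"
    then obtain c where c: "a j = (\<Sum>i\<in>I - {j}. c i *\<^sub>R a i)"
      using span_image_sum_representation[of "I - {j}" "a j" a] fin e p by auto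
    have "(\<Sum>i\<in>I - {j}. (c(j := -1)) i *\<^sub>R a i) = (\<Sum>i\<in>I - {j}. c i *\<^sub>R a i)"
      by (rule sum.cong) auto
    then have "(\<Sum>i\<in>I. (c(j := -1)) i *\<^sub>R a i) = - a j + (\<Sum>i\<in>I - {j}. c i *\<^sub>R a i)"
      using fin j by (simp add: sum.remove)
    then have "(\<Sum>i\<in>I. (c(j := -1)) i *\<^sub>R a i) = 0" using c by simp
    from independent_familyD[OF ind this j] show False by simp
  qed
  then have rr: "r \<bullet> r \<noteq> 0" by simp
  have "a j \<bullet> r = r \<bullet> r"
    using e r[OF p] by (simp add: orthogonal_def inner_add_left inner_add_right inner_commute)
  moreover have "a i \<bullet> r = 0" if "i \<in> I - {j}" for i
    using r[of "a i"] that by (simp add: span_base orthogonal_def inner_commute)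
  ultimately show ?thesis using rr by (intro that[of "r /\<^sub>R (r \<bullet> r)"]) auto
qed

lemma independent_family_farkas:
  fixes a :: "'i \<Rightarrow> 'v::euclidean_space"
  assumes fin: "finite I" and ind: "independent_family I a"
    and hyp: "\<And>d. \<forall>i\<in>I. a i \<bullet> d \<le> 0 \<Longrightarrow> c \<bullet> d \<ge> 0"
  obtains l where "\<forall>i\<in>I. l i \<ge> 0" "c = - (\<Sum>i\<in>I. l i *\<^sub>R a i)"
proof -
  obtain p r where p: "p \<in> span (a ` I)"
    and r: "\<And>w. w \<in> span (a ` I) \<Longrightarrow> orthogonal r w" and e: "c = p + r"
    using orthogonal_subspace_decomp_exists by blast
  have "\<forall>i\<in>I. a i \<bullet> (- r) \<le> 0"
    using r by (auto simp: span_base orthogonal_def inner_commute)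
      (metis imageI inner_commute span_base order_refl)
  then have "c \<bullet> (- r) \<ge> 0" by (rule hyp)
  moreover have "c \<bullet> (- r) = - (r \<bullet> r)"
    using e r[OF p] by (simp add: orthogonal_def inner_add_left inner_add_right inner_commute)
  ultimately have "r \<bullet> r \<le> 0" by simp
  then have "r = 0" by (metis inner_eq_zero_iff inner_ge_zero order_antisym)
  then obtain m where m: "c = (\<Sum>i\<in>I. m i *\<^sub>R a i)"
    using span_image_sum_representation[OF fin] e p by auto
  have "m j \<le> 0" if j: "j \<in> I" for j
  proof -
    obtain d where d: "a j \<bullet> d = 1" "\<And>i. i \<in> I - {j} \<Longrightarrow> a i \<bullet> d = 0"
      using independent_family_dual_vector[OF fin j ind] by blast
    have "a i \<bullet> (- d) \<le> 0" if "i \<in> I" for i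
      using d that by (cases "i = j") auto
    then have "\<forall>i\<in>I. a i \<bullet> (- d) \<le> 0" by blast
    then have "c \<bullet> (- d) \<ge> 0" by (rule hyp)
    moreover have "c \<bullet> d = m j * (a j \<bullet> d) + (\<Sum>i\<in>I - {j}. m i * (a i \<bullet> d))"
      using fin j by (simp add: m inner_add_left inner_sum_left sum.remove)
    ultimately show ?thesis using d by simp
  qed
  then show ?thesis
    by (intro that[of "\<lambda>i. - m i"]) (auto simp: m sum_negf)
qed

lemma independent_family_card_le:
  fixes a :: "'i \<Rightarrow> 'v::euclidean_space"
  assumes fin: "finite I" and ind: "independent_family I a"
  shows "card I \<le> DIM('v)"
proof -
  have inj: "inj_on a I"
  proof (rule inj_onI, rule ccontr)
    fix i j assume ij: "i \<in> I" "j \<in> I" "a i = a j" "i \<noteq> j"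
    let ?c = "\<lambda>l. if l = i then (1::real) else if l = j then -1 else 0"
    have "(\<Sum>l\<in>I. ?c l *\<^sub>R a l) = (\<Sum>l\<in>I. (if l = i then a i else 0) + (if l = j then - a j else 0))"
      by (rule sum.cong) (use ij in auto)
    also have "\<dots> = 0" using fin ij by (simp add: sum.distrib)
    finally have "(\<Sum>l\<in>I. ?c l *\<^sub>R a l) = 0" .
    from independent_familyD[OF ind this ij(1)] show False by simp
  qed
  have "independent (a ` I)"
  proof
    assume "dependent (a ` I)"
    then obtain u where u: "\<exists>v\<in>a ` I. u v \<noteq> 0" "(\<Sum>v\<in>a ` I. u v *\<^sub>R v) = 0"
      using dependent_finite[of "a ` I"] fin by auto
    have "(\<Sum>i\<in>I. u (a i) *\<^sub>R a i) = 0" using u(2) sum.reindex[OF inj, of "\<lambda>v. u v *\<^sub>R v"] by simp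
    from independent_familyD[OF ind this] show False using u(1) by auto
  qed
  then have "card (a ` I) \<le> DIM('v)" by (rule independent_card_le)
  then show ?thesis using card_image[OF inj] by simp
qed

lemma inner_Basis_embedding:
  fixes \<sigma> :: "'i \<Rightarrow> 'v::euclidean_space"
  assumes fin: "finite A" and sb: "\<sigma> ` A \<subseteq> Basis" and inj: "inj_on \<sigma> A"
  shows "j \<in> A \<Longrightarrow> ((\<Sum>i\<in>A. c i *\<^sub>R \<sigma> i) + (\<Sum>b\<in>Basis - \<sigma> ` A. d b *\<^sub>R b)) \<bullet> \<sigma> j = c j"
    and "b0 \<in> Basis - \<sigma> ` A \<Longrightarrow> ((\<Sum>i\<in>A. c i *\<^sub>R \<sigma> i) + (\<Sum>b\<in>Basis - \<sigma> ` A. d b *\<^sub>R b)) \<bullet> b0 = d b0"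
proof -
  assume j: "j \<in> A"
  then have sj: "\<sigma> j \<in> Basis" using sb by auto
  have "(\<Sum>i\<in>A. c i *\<^sub>R \<sigma> i) \<bullet> \<sigma> j = (\<Sum>i\<in>A. if i = j then c i else 0)"
    unfolding inner_sum_left
  proof (rule sum.cong)
    fix i assume i: "i \<in> A"
    have "\<sigma> i \<in> Basis" using sb i by auto
    moreover have "\<sigma> i = \<sigma> j \<longleftrightarrow> i = j" using inj i j by (meson inj_on_eq_iff)
    ultimately show "c i *\<^sub>R \<sigma> i \<bullet> \<sigma> j = (if i = j then c i else 0)"
      using sj by (auto simp: inner_Basis)
  qed simp
  moreover have "(\<Sum>b\<in>Basis - \<sigma> ` A. d b *\<^sub>R b) \<bullet> \<sigma> j = 0"
    unfolding inner_sum_left by (rule sum.neutral) (use sj j in \<open>auto simp: inner_Basis\<close>)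
  ultimately show "((\<Sum>i\<in>A. c i *\<^sub>R \<sigma> i) + (\<Sum>b\<in>Basis - \<sigma> ` A. d b *\<^sub>R b)) \<bullet> \<sigma> j = c j"
    using fin j by (simp add: inner_add_left)
next
  assume b0: "b0 \<in> Basis - \<sigma> ` A"
  have "(\<Sum>i\<in>A. c i *\<^sub>R \<sigma> i) \<bullet> b0 = 0"
    unfolding inner_sum_left
  proof (rule sum.neutral, rule ballI)
    fix i assume "i \<in> A"
    then have "\<sigma> i \<in> Basis" "\<sigma> i \<noteq> b0" using sb b0 by auto
    then show "c i *\<^sub>R \<sigma> i \<bullet> b0 = 0" using b0 by (simp add: inner_Basis)
  qed
  moreover have "(\<Sum>b\<in>Basis - \<sigma> ` A. d b *\<^sub>R b) \<bullet> b0 = (\<Sum>b\<in>Basis - \<sigma> ` A. if b = b0 then d b else 0)"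
    unfolding inner_sum_left by (rule sum.cong) (use b0 in \<open>auto simp: inner_Basis\<close>)
  ultimately show "((\<Sum>i\<in>A. c i *\<^sub>R \<sigma> i) + (\<Sum>b\<in>Basis - \<sigma> ` A. d b *\<^sub>R b)) \<bullet> b0 = d b0"
    using b0 by (simp add: inner_add_left)
qed

lemma Basis_embedding_eq_0_iff:
  fixes \<sigma> :: "'i \<Rightarrow> 'v::euclidean_space"
  assumes "finite A" "\<sigma> ` A \<subseteq> Basis" "inj_on \<sigma> A"
  shows "(\<Sum>i\<in>A. c i *\<^sub>R \<sigma> i) + (\<Sum>b\<in>Basis - \<sigma> ` A. d b *\<^sub>R b) = 0 \<longleftrightarrow>
    (\<forall>i\<in>A. c i = 0) \<and> (\<forall>b\<in>Basis - \<sigma> ` A. d b = 0)"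
proof
  assume "(\<Sum>i\<in>A. c i *\<^sub>R \<sigma> i) + (\<Sum>b\<in>Basis - \<sigma> ` A. d b *\<^sub>R b) = 0"
  then show "(\<forall>i\<in>A. c i = 0) \<and> (\<forall>b\<in>Basis - \<sigma> ` A. d b = 0)"
    using inner_Basis_embedding[OF assms, of _ c d] by (metis inner_zero_left)
qed simp

lemma Basis_embedding_exists:
  assumes "finite A" "card A \<le> DIM('v)"
  obtains \<sigma> :: "'i \<Rightarrow> 'v::euclidean_space" where "\<sigma> ` A \<subseteq> Basis" "inj_on \<sigma> A"
  using card_le_inj[OF assms(1) finite_Basis] assms(2) that by auto

section \<open>Differential calculus\<close>

lemma linear_eq_inner_gradient:
  fixes L :: "'b::euclidean_space \<Rightarrow> real"
  assumes "linear L"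
  shows "L v = (\<Sum>b\<in>Basis. L b *\<^sub>R b) \<bullet> v"
proof -
  have "L v = L (\<Sum>b\<in>Basis. (v \<bullet> b) *\<^sub>R b)" by (simp add: euclidean_representation)
  also have "\<dots> = (\<Sum>b\<in>Basis. (v \<bullet> b) * L b)"
    using assms by (simp add: linear_sum linear_cmul)
  also have "\<dots> = (\<Sum>b\<in>Basis. L b *\<^sub>R b) \<bullet> v"
    by (simp add: inner_sum_left) (metis inner_commute mult.commute)
  finally show ?thesis .
qed

definition partial_grad :: "('a::real_normed_vector \<times> 'b::euclidean_space) \<Rightarrow>\<^sub>L real \<Rightarrow> 'b" where
  "partial_grad D = (\<Sum>b\<in>Basis. D (0, b) *\<^sub>R b)"

lemma linear_blinfun_partial: "linear (\<lambda>v. blinfun_apply D (0::'a::real_normed_vector, v))"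
proof -
  have "linear (\<lambda>v::'b::real_normed_vector. (0::'a, v))" by (intro linearI) auto
  then show ?thesis using linear_compose[of "\<lambda>v. (0::'a, v)" "blinfun_apply D"]
    by (simp add: o_def bounded_linear.linear[OF blinfun.bounded_linear_right])
qed

lemma inner_partial_grad: "partial_grad D \<bullet> v = D (0, v)"
  unfolding partial_grad_def using linear_eq_inner_gradient[OF linear_blinfun_partial, of D v] by simp

lemma all_inner_eq_0_iff: "(\<forall>v. t \<bullet> v = 0) \<longleftrightarrow> (t::'b::real_inner) = 0"
  by (metis inner_eq_zero_iff inner_zero_left)

lemma bounded_linear_partial_grad: "bounded_linear partial_grad"
  unfolding partial_grad_def
  by (intro bounded_linear_sum bounded_linear_compose[OF bounded_linear_scaleR_left]
      bounded_bilinear.bounded_linear_left[OF bounded_bilinear_blinfun_apply])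

lemma blinfun_apply_Pair_zero_scaleR: "blinfun_apply D (0, r *\<^sub>R v) = r * blinfun_apply D (0, v)"
  using blinfun.scaleR_right[of D r "(0, v)"] by simp

lemma blinfun_apply_Pair_zero_uminus: "blinfun_apply D (0, - v) = - blinfun_apply D (0, v)"
  using blinfun.minus_right[of D "(0, v)"] by simp

lemma has_derivative_partial_snd:
  assumes "(case_prod F has_derivative blinfun_apply D) (at (x, y))"
  shows "(F x has_derivative (\<lambda>v. D (0, v))) (at y)"
proof -
  have "((\<lambda>y. (x, y)) has_derivative (\<lambda>v. (0, v))) (at y)"
    by (auto intro!: derivative_eq_intros)
  then have "((case_prod F \<circ> (\<lambda>y. (x, y))) has_derivative (blinfun_apply D \<circ> (\<lambda>v. (0, v)))) (at y)"
    by (rule diff_chain_at) (use assms in simp)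
  then show ?thesis by (simp add: o_def)
qed

lemma has_real_derivative_along_line:
  fixes f :: "'b::real_normed_vector \<Rightarrow> real"
  assumes "(f has_derivative D) (at y)"
  shows "((\<lambda>t. f (y + t *\<^sub>R d)) has_real_derivative D d) (at 0)"
proof -
  have "((\<lambda>t. y + t *\<^sub>R d) has_derivative (\<lambda>t. t *\<^sub>R d)) (at 0)"
    by (auto intro!: derivative_eq_intros)
  from diff_chain_at[OF this] assms
  have "((f \<circ> (\<lambda>t. y + t *\<^sub>R d)) has_derivative (D \<circ> (\<lambda>t. t *\<^sub>R d))) (at 0)" by simp
  moreover have "D \<circ> (\<lambda>t. t *\<^sub>R d) = (*) (D d)"
    using linear_cmul[OF has_derivative_linear[OF assms]] by (auto simp: fun_eq_iff)
  ultimately show ?thesis by (simp add: has_field_derivative_def o_def)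
qed

lemma second_partial_along_line:
  assumes "(F1 has_derivative blinfun_apply (F2 (x, y))) (at (x, y))"
  shows "((\<lambda>t. blinfun_apply (F1 (x, y + t *\<^sub>R v)) (0, v)) has_real_derivative
           blinfun_apply (blinfun_apply (F2 (x, y)) (0, v)) (0, v)) (at 0)"
proof -
  have "((\<lambda>t. (x, y + t *\<^sub>R v)) has_derivative (\<lambda>t. (0, t *\<^sub>R v))) (at 0)"
    by (auto intro!: derivative_eq_intros)
  from diff_chain_at[OF this] assms
  have "((\<lambda>t. F1 (x, y + t *\<^sub>R v)) has_derivative (\<lambda>t. F2 (x, y) (0, t *\<^sub>R v))) (at 0)"
    by (simp add: o_def)
  from bounded_linear.has_derivative
      [OF bounded_bilinear.bounded_linear_left[OF bounded_bilinear_blinfun_apply] this]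
  have "((\<lambda>t. F1 (x, y + t *\<^sub>R v) (0, v)) has_derivative (\<lambda>t. F2 (x, y) (0, t *\<^sub>R v) (0, v))) (at 0)" .
  moreover have "(\<lambda>t. F2 (x, y) (0, t *\<^sub>R v) (0, v)) = (*) (F2 (x, y) (0, v) (0, v))"
    using blinfun.scaleR_right[of "F2 (x, y)" _ "(0, v)"] by (simp add: blinfun.scaleR_left fun_eq_iff)
  ultimately show ?thesis by (simp add: has_field_derivative_def)
qed

lemma eventually_at_right_less_of_negative_deriv:
  assumes "(f has_real_derivative l) (at 0)" "l < 0"
  shows "eventually (\<lambda>t. f t < f 0) (at_right 0)"
proof -
  obtain e where "e > 0" "\<And>t. 0 < t \<Longrightarrow> t < e \<Longrightarrow> f t < f 0"
    using DERIV_neg_dec_right[OF assms] by auto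
  then show ?thesis unfolding eventually_at_right_field by auto
qed

lemma isCont_imp_eventually_nhds:
  fixes f :: "'a::t2_space \<Rightarrow> 'b::linorder_topology"
  assumes "isCont f x0"
  shows "f x0 < c \<Longrightarrow> eventually (\<lambda>x. f x < c) (nhds x0)"
    and "c < f x0 \<Longrightarrow> eventually (\<lambda>x. c < f x) (nhds x0)"
  using assms order_tendstoD unfolding isCont_def tendsto_at_iff_tendsto_nhds by blast+

lemma eventually_nhds_all_positive:
  fixes f :: "'a::t2_space \<Rightarrow> 'i \<Rightarrow> real"
  assumes "finite A" "\<And>i. i \<in> A \<Longrightarrow> isCont (\<lambda>x. f x i) x0" "\<And>i. i \<in> A \<Longrightarrow> f x0 i > 0"
  shows "eventually (\<lambda>x. \<forall>i\<in>A. f x i > 0) (nhds x0)"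
  by (rule eventually_ball_finite[OF assms(1)]) (use assms(2,3) isCont_imp_eventually_nhds(2) in blast)

definition pair_xy :: "'x \<times> 'y \<times> 'w \<Rightarrow> 'x \<times> 'y" where
  "pair_xy z = (fst z, fst (snd z))"

lemma pair_xy_Pair [simp]: "pair_xy (x, y, w) = (x, y)"
  unfolding pair_xy_def by simp

lemma has_derivative_pair_xy:
  "(pair_xy has_derivative pair_xy)
     (at (z :: 'x::real_normed_vector \<times> 'y::real_normed_vector \<times> 'w::real_normed_vector))"
  unfolding pair_xy_def[abs_def] by (auto intro!: derivative_eq_intros)

lemma continuous_on_pair_xy:
  "continuous_on UNIV
     (pair_xy :: 'x::real_normed_vector \<times> 'y::real_normed_vector \<times> 'w::real_normed_vector \<Rightarrow> _)"
  unfolding pair_xy_def[abs_def] by (intro continuous_intros)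

lemma C1_local_inverse:
  fixes \<Phi> :: "'c::euclidean_space \<Rightarrow> 'c"
  assumes der: "\<And>z. (\<Phi> has_derivative D\<Phi> z) (at z)"
    and cont: "\<And>u. continuous_on UNIV (\<lambda>z. D\<Phi> z u)"
    and inj: "inj (D\<Phi> z0)"
  obtains U V \<Psi> where "open U" "z0 \<in> U" "open V" "\<Phi> z0 \<in> V"
    "\<And>v. v \<in> V \<Longrightarrow> \<Psi> v \<in> U \<and> \<Phi> (\<Psi> v) = v" "\<And>z. z \<in> U \<Longrightarrow> \<Psi> (\<Phi> z) = z"
    "\<And>v. v \<in> V \<Longrightarrow> \<Psi> differentiable (at v)"
proof -
  have bl: "bounded_linear (D\<Phi> z)" for z using der has_derivative_bounded_linear by blast
  define \<Phi>' where "\<Phi>' z = Blinfun (D\<Phi> z)" for z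
  have \<Phi>'_apply: "blinfun_apply (\<Phi>' z) = D\<Phi> z" for z
    unfolding \<Phi>'_def using bl bounded_linear_Blinfun_apply by blast
  have der': "\<And>z. z \<in> UNIV \<Longrightarrow> (\<Phi> has_derivative blinfun_apply (\<Phi>' z)) (at z)"
    using der \<Phi>'_apply by simp
  have cont': "continuous_on UNIV \<Phi>'"
    by (rule continuous_on_blinfun_componentwise) (simp add: \<Phi>'_apply cont)
  have lin: "linear (D\<Phi> z0)" using bl bounded_linear.linear by blast
  have lin_inv: "linear (inv (D\<Phi> z0))" by (rule inj_linear_imp_inv_linear[OF lin inj])
  define inv\<Phi>' where "inv\<Phi>' = Blinfun (inv (D\<Phi> z0))"
  have inv_apply: "blinfun_apply inv\<Phi>' = inv (D\<Phi> z0)"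
    unfolding inv\<Phi>'_def using lin_inv linear_conv_bounded_linear bounded_linear_Blinfun_apply by blast
  have inv: "inv\<Phi>' o\<^sub>L \<Phi>' z0 = id_blinfun"
    by (rule blinfun_eqI) (simp add: inv_apply \<Phi>'_apply inv_f_f[OF inj])
  obtain U V \<Psi> \<Psi>' where U: "open U" "U \<subseteq> UNIV" "z0 \<in> U" "open V" "\<Phi> z0 \<in> V"
    "homeomorphism U V \<Phi> \<Psi>" "\<And>y. y \<in> V \<Longrightarrow> (\<Psi> has_derivative (\<Psi>' y)) (at y)"
    using inverse_function_theorem[OF open_UNIV der' cont' UNIV_I inv] by metis
  show ?thesis
  proof (rule that[of U V \<Psi>])
    show "open U" "z0 \<in> U" "open V" "\<Phi> z0 \<in> V" using U by auto
    show "\<And>v. v \<in> V \<Longrightarrow> \<Psi> v \<in> U \<and> \<Phi> (\<Psi> v) = v" "\<And>z. z \<in> U \<Longrightarrow> \<Psi> (\<Phi> z) = z"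
      using U(6) unfolding homeomorphism_def by auto
    show "\<And>v. v \<in> V \<Longrightarrow> \<Psi> differentiable (at v)" using U(7) differentiable_def by blast
  qed
qed

lemma implicit_function:
  fixes \<Phi> :: "'a::euclidean_space \<times> 'c::euclidean_space \<Rightarrow> 'a \<times> 'c"
  assumes fst: "\<And>z. fst (\<Phi> z) = fst z"
    and der: "\<And>z. (\<Phi> has_derivative D\<Phi> z) (at z)"
    and cont: "\<And>w. continuous_on UNIV (\<lambda>z. D\<Phi> z w)"
    and inj: "inj (D\<Phi> (x0, u0))" and zero: "\<Phi> (x0, u0) = (x0, 0)"
  obtains e u where "e > 0" "u x0 = u0" "u differentiable (at x0)"
    "\<And>x. x \<in> ball x0 e \<Longrightarrow> \<Phi> (x, u x) = (x, 0)"
    "\<And>x. x \<in> ball x0 e \<Longrightarrow> \<exists>\<epsilon>>0. \<forall>v. dist v (u x) < \<epsilon> \<longrightarrow> \<Phi> (x, v) = (x, 0) \<longrightarrow> v = u x"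
proof -
  obtain U V \<Psi> where U: "open U" "(x0, u0) \<in> U" and V: "open V" "\<Phi> (x0, u0) \<in> V"
    and \<Psi>: "\<And>v. v \<in> V \<Longrightarrow> \<Psi> v \<in> U \<and> \<Phi> (\<Psi> v) = v" "\<And>z. z \<in> U \<Longrightarrow> \<Psi> (\<Phi> z) = z"
      "\<And>v. v \<in> V \<Longrightarrow> \<Psi> differentiable (at v)"
    by (rule C1_local_inverse[OF der cont inj]) (rule that)
  define q where "q x = (x, 0::'c)" for x :: 'a
  define u where "u x = snd (\<Psi> (q x))" for x
  have q0: "q x0 \<in> V" using V(2) zero unfolding q_def by simp
  obtain e where "e > 0" and e: "ball (q x0) e \<subseteq> V" using V(1) q0 open_contains_ball by blast
  have qV: "q x \<in> V" if "x \<in> ball x0 e" for x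
    using e that unfolding q_def by (auto simp: dist_Pair_Pair)
  have \<Psi>q: "\<Psi> (q x) = (x, u x)" if "q x \<in> V" for x
    using \<Psi>(1)[OF that] fst[of "\<Psi> (q x)"] unfolding u_def q_def by (metis fst_conv prod.collapse)
  have "u x0 = u0" using \<Psi>(2)[OF U(2)] zero unfolding u_def q_def by simp
  moreover have "u differentiable (at x0)"
  proof -
    have "q differentiable (at x0)" unfolding q_def
      by (auto intro!: derivative_eq_intros simp: differentiable_def)
    from differentiable_chain_at[OF this \<Psi>(3)[OF q0]] have "(\<Psi> \<circ> q) differentiable (at x0)" .
    from differentiable_chain_at[OF this differentiableI[OF has_derivative_snd[OF has_derivative_ident]]]
    show ?thesis unfolding u_def[abs_def] by (simp add: o_def)
  qed
  moreover have "\<Phi> (x, u x) = (x, 0)" if "x \<in> ball x0 e" for x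
    using \<Psi>(1)[OF qV[OF that]] \<Psi>q[OF qV[OF that]] unfolding q_def by simp
  moreover have "\<exists>\<epsilon>>0. \<forall>v. dist v (u x) < \<epsilon> \<longrightarrow> \<Phi> (x, v) = (x, 0) \<longrightarrow> v = u x" if x: "x \<in> ball x0 e" for x
  proof -
    obtain \<epsilon> where "\<epsilon> > 0" and \<epsilon>: "ball (x, u x) \<epsilon> \<subseteq> U"
      using U(1) \<Psi>(1)[OF qV[OF x]] \<Psi>q[OF qV[OF x]] open_contains_ball by metis
    have "v = u x" if "dist v (u x) < \<epsilon>" "\<Phi> (x, v) = (x, 0)" for v
    proof -
      have "(x, v) \<in> U" using \<epsilon> that(1) by (auto simp: dist_Pair_Pair dist_commute)
      then have "\<Psi> (q x) = (x, v)" using \<Psi>(2) that(2) unfolding q_def by metis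
      then show ?thesis using \<Psi>q[OF qV[OF x]] by simp
    qed
    with \<open>\<epsilon> > 0\<close> show ?thesis by blast
  qed
  ultimately show ?thesis using that \<open>e > 0\<close> by blast
qed

lemma bounded_ray_imp_zero:
  fixes d :: "'a::real_normed_vector"
  assumes "bounded S" and ray: "\<And>t. t \<ge> 0 \<Longrightarrow> y0 + t *\<^sub>R d \<in> S"
  shows "d = 0"
proof (rule ccontr)
  assume "d \<noteq> 0"
  obtain B where B: "\<And>y. y \<in> S \<Longrightarrow> norm y \<le> B" using assms(1) unfolding bounded_iff by blast
  have "norm y0 \<le> B" using B ray[of 0] by simp
  then have "B \<ge> 0" using norm_ge_zero[of y0] by linarith
  define t where "t = (B + norm y0 + 1) / norm d"
  have "t \<ge> 0" unfolding t_def using \<open>B \<ge> 0\<close> by simp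
  have "norm (t *\<^sub>R d) = t * norm d" using \<open>t \<ge> 0\<close> by simp
  also have "\<dots> = B + norm y0 + 1" unfolding t_def using \<open>d \<noteq> 0\<close> by simp
  finally have "norm (t *\<^sub>R d) = B + norm y0 + 1" .
  moreover have "norm (t *\<^sub>R d) \<le> norm (y0 + t *\<^sub>R d) + norm y0"
    using norm_triangle_ineq4[of "y0 + t *\<^sub>R d" y0] by simp
  moreover have "norm (y0 + t *\<^sub>R d) \<le> B" using B ray \<open>t \<ge> 0\<close> by blast
  ultimately show False by simp
qed

section \<open>Convexity\<close>

lemma convex_on_ge_linearization:
  fixes \<phi> :: "'b::real_normed_vector \<Rightarrow> real"
  assumes cvx: "convex_on UNIV \<phi>" and d: "(\<phi> has_derivative D) (at y)"
  shows "\<phi> y + D (y' - y) \<le> \<phi> y'"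
proof (rule ccontr)
  assume "\<not> \<phi> y + D (y' - y) \<le> \<phi> y'"
  then have pos: "D (y' - y) - (\<phi> y' - \<phi> y) > 0" by simp
  have "((\<lambda>t. \<phi> (y + t *\<^sub>R (y' - y)) - t * (\<phi> y' - \<phi> y)) has_real_derivative D (y' - y) - (\<phi> y' - \<phi> y)) (at 0)"
    using has_real_derivative_along_line[OF d] by (auto intro!: derivative_eq_intros)
  from DERIV_pos_inc_right[OF this pos] obtain e where e: "e > 0"
    "\<And>t. t > 0 \<Longrightarrow> t < e \<Longrightarrow> \<phi> y < \<phi> (y + t *\<^sub>R (y' - y)) - t * (\<phi> y' - \<phi> y)"
    by force
  define t where "t = min (e/2) 1"
  have t: "t > 0" "t < e" "t \<le> 1" using e(1) unfolding t_def by auto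
  have "\<phi> ((1 - t) *\<^sub>R y + t *\<^sub>R y') \<le> (1 - t) * \<phi> y + t * \<phi> y'"
    using convex_onD[OF cvx, of t y y'] t by auto
  moreover have "(1 - t) *\<^sub>R y + t *\<^sub>R y' = y + t *\<^sub>R (y' - y)"
    by (simp add: algebra_simps)
  ultimately show False using e(2)[OF t(1) t(2)] by (simp add: algebra_simps)
qed

lemma convex_on_second_derivative_nonneg:
  fixes \<phi> :: "'b::real_normed_vector \<Rightarrow> real"
  assumes cvx: "convex_on UNIV \<phi>" and d: "\<And>y. (\<phi> has_derivative D y) (at y)"
    and q: "((\<lambda>t. D (y + t *\<^sub>R v) v) has_real_derivative q) (at 0)"
  shows "q \<ge> 0"
proof (rule ccontr)
  assume "\<not> q \<ge> 0"
  with DERIV_neg_dec_right[OF q] obtain e where e: "e > 0"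
    "\<And>t. t > 0 \<Longrightarrow> t < e \<Longrightarrow> D (y + t *\<^sub>R v) v < D y v" by force
  define t where "t = e/2"
  have t: "t > 0" "t < e" using e(1) unfolding t_def by auto
  have "\<phi> y + t * D y v \<le> \<phi> (y + t *\<^sub>R v)"
    using convex_on_ge_linearization[OF cvx d[of y], of "y + t *\<^sub>R v"]
      linear_cmul[OF has_derivative_linear[OF d]] by simp
  moreover have "\<phi> (y + t *\<^sub>R v) - t * D (y + t *\<^sub>R v) v \<le> \<phi> y"
    using convex_on_ge_linearization[OF cvx d[of "y + t *\<^sub>R v"], of y]
      linear_cmul[OF has_derivative_linear[OF d], of "y + t *\<^sub>R v" "-t" v] by simp
  ultimately have "t * D y v \<le> t * D (y + t *\<^sub>R v) v" by linarith
  then have "D y v \<le> D (y + t *\<^sub>R v) v" using t(1) by simp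
  then show False using e(2)[OF t] by simp
qed

lemma strongly_convexD:
  assumes "strongly_convex \<mu> \<phi>" "0 \<le> t" "t \<le> 1"
  shows "\<phi> (t *\<^sub>R a + (1 - t) *\<^sub>R b) \<le> t * \<phi> a + (1 - t) * \<phi> b - \<mu> / 2 * t * (1 - t) * (norm (a - b))\<^sup>2"
  using assms unfolding strongly_convex_def by blast

lemma strongly_convex_pos: "strongly_convex \<mu> \<phi> \<Longrightarrow> \<mu> > 0"
  unfolding strongly_convex_def by blast

lemma strongly_convex_imp_convex_on:
  assumes "strongly_convex \<mu> \<phi>"
  shows "convex_on UNIV \<phi>"
proof (rule convex_onI)
  fix t :: real and x y :: 'a assume t: "0 < t" "t < 1"
  have "\<phi> ((1 - t) *\<^sub>R x + t *\<^sub>R y) \<le> (1 - t) * \<phi> x + t * \<phi> y - \<mu> / 2 * (1 - t) * t * (norm (x - y))\<^sup>2"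
    using strongly_convexD[OF assms, of "1 - t" x y] t by simp
  moreover have "\<mu> / 2 * (1 - t) * t * (norm (x - y))\<^sup>2 \<ge> 0"
    using strongly_convex_pos[OF assms] t by simp
  ultimately show "\<phi> ((1 - t) *\<^sub>R x + t *\<^sub>R y) \<le> (1 - t) * \<phi> x + t * \<phi> y" by simp
qed simp

lemma strongly_convex_minus_square_convex_on:
  fixes \<phi> :: "'b::real_inner \<Rightarrow> real"
  assumes "strongly_convex \<mu> \<phi>"
  shows "convex_on UNIV (\<lambda>y. \<phi> y - \<mu> / 2 * (y \<bullet> y))"
proof (rule convex_onI)
  fix t :: real and x y :: 'b assume t: "0 < t" "t < 1"
  define u where "u = (1 - t) *\<^sub>R x + t *\<^sub>R y"
  have "\<phi> u \<le> (1 - t) * \<phi> x + t * \<phi> y - \<mu> / 2 * (1 - t) * t * (norm (x - y))\<^sup>2"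
    using strongly_convexD[OF assms, of "1 - t" x y] t unfolding u_def by simp
  moreover have uu: "u \<bullet> u = (1 - t) * (x \<bullet> x) + t * (y \<bullet> y) - (1 - t) * t * (norm (x - y))\<^sup>2"
    unfolding u_def power2_norm_eq_inner
    by (simp add: inner_add_left inner_add_right inner_diff_left inner_diff_right inner_commute algebra_simps)
  then have "\<mu> / 2 * (u \<bullet> u) = \<mu> / 2 * ((1 - t) * (x \<bullet> x) + t * (y \<bullet> y)) - \<mu> / 2 * (1 - t) * t * (norm (x - y))\<^sup>2"
    unfolding uu by (simp add: field_simps)
  moreover have "(1 - t) * (\<phi> x - \<mu> / 2 * (x \<bullet> x)) + t * (\<phi> y - \<mu> / 2 * (y \<bullet> y)) =
      (1 - t) * \<phi> x + t * \<phi> y - \<mu> / 2 * ((1 - t) * (x \<bullet> x) + t * (y \<bullet> y))"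
    by (simp add: field_simps)
  ultimately show "\<phi> u - \<mu> / 2 * (u \<bullet> u) \<le> (1 - t) * (\<phi> x - \<mu> / 2 * (x \<bullet> x)) + t * (\<phi> y - \<mu> / 2 * (y \<bullet> y))"
    by linarith
qed simp

lemma strongly_convex_ge_quadratic:
  fixes \<phi> :: "'b::real_inner \<Rightarrow> real"
  assumes sc: "strongly_convex \<mu> \<phi>" and d: "(\<phi> has_derivative D) (at y1)"
  shows "\<phi> y1 + D (y - y1) + \<mu> / 2 * ((y - y1) \<bullet> (y - y1)) \<le> \<phi> y"
proof -
  have "((\<lambda>y. \<phi> y - \<mu> / 2 * (y \<bullet> y)) has_derivative (\<lambda>v. D v - \<mu> / 2 * (y1 \<bullet> v + v \<bullet> y1))) (at y1)"
    using d by (auto intro!: derivative_eq_intros)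
  from convex_on_ge_linearization[OF strongly_convex_minus_square_convex_on[OF sc] this, of y]
  show ?thesis by (simp add: inner_diff_left inner_diff_right inner_commute algebra_simps)
qed

lemma strongly_convex_attains_min:
  fixes \<phi> :: "'b::euclidean_space \<Rightarrow> real"
  assumes sc: "strongly_convex \<mu> \<phi>" and d: "(\<phi> has_derivative D) (at y1)"
    and cont: "continuous_on UNIV \<phi>" and S: "closed S" "y1 \<in> S"
  obtains y where "y \<in> S" "\<forall>y'\<in>S. \<phi> y \<le> \<phi> y'"
proof -
  have mu: "\<mu> > 0" using strongly_convex_pos[OF sc] .
  define c where "c = (\<Sum>b\<in>Basis. D b *\<^sub>R b)"
  have Dc: "D v = c \<bullet> v" for v
    unfolding c_def by (rule linear_eq_inner_gradient[OF has_derivative_linear[OF d]])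
  define R where "R = 2 * norm c / \<mu>"
  define K where "K = S \<inter> cball y1 R"
  have "compact K" unfolding K_def using S(1) by (intro closed_Int_compact) auto
  moreover have "y1 \<in> K" unfolding K_def R_def using S mu by auto
  ultimately obtain y where y: "y \<in> K" "\<forall>y'\<in>K. \<phi> y \<le> \<phi> y'"
    using continuous_attains_inf[OF _ _ continuous_on_subset[OF cont]] by blast
  have "\<phi> y \<le> \<phi> y'" if y': "y' \<in> S" for y'
  proof (cases "y' \<in> K")
    case False
    define r where "r = norm (y' - y1)"
    have r: "r > R" using False y' unfolding K_def r_def by (auto simp: dist_norm norm_minus_commute)
    then have "r > 0" using mu unfolding R_def by (smt (verit) divide_nonneg_pos norm_ge_zero)
    moreover have "\<mu> / 2 * r > norm c" using r mu unfolding R_def by (simp add: field_simps)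
    ultimately have "\<mu> / 2 * r\<^sup>2 - norm c * r > 0" by (simp add: power2_eq_square algebra_simps)
    moreover have "\<phi> y1 + c \<bullet> (y' - y1) + \<mu> / 2 * r\<^sup>2 \<le> \<phi> y'"
      using strongly_convex_ge_quadratic[OF sc d, of y'] unfolding r_def
      by (simp add: Dc power2_norm_eq_inner)
    moreover have "c \<bullet> (y' - y1) \<ge> - (norm c * r)"
      unfolding r_def using norm_cauchy_schwarz[of "-c" "y' - y1"] by simp
    moreover have "\<phi> y \<le> \<phi> y1" using y \<open>y1 \<in> K\<close> by auto
    ultimately show ?thesis by linarith
  qed (use y in auto)
  then show ?thesis using y(1) that unfolding K_def by auto
qed

lemma strongly_convex_min_unique:
  fixes \<phi> :: "'b::real_normed_vector \<Rightarrow> real"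
  assumes sc: "strongly_convex \<mu> \<phi>" and S: "convex S"
    and y: "y \<in> S" "\<forall>z\<in>S. \<phi> y \<le> \<phi> z" and y': "y' \<in> S" "\<forall>z\<in>S. \<phi> y' \<le> \<phi> z"
  shows "y = y'"
proof (rule ccontr)
  assume "y \<noteq> y'"
  then have pos: "\<mu> / 2 * (1/2) * (1 - 1/2) * (norm (y - y'))\<^sup>2 > 0"
    using strongly_convex_pos[OF sc] by simp
  define m where "m = (1/2) *\<^sub>R y + (1 - 1/2) *\<^sub>R y'"
  have "m \<in> S" unfolding m_def using S y(1) y'(1) unfolding convex_def by auto
  then have "\<phi> y \<le> \<phi> m" using y(2) by blast
  moreover have "\<phi> m \<le> (1/2) * \<phi> y + (1 - 1/2) * \<phi> y' - \<mu> / 2 * (1/2) * (1 - 1/2) * (norm (y - y'))\<^sup>2"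
    unfolding m_def by (rule strongly_convexD[OF sc]) auto
  moreover have "\<phi> y = \<phi> y'" using y y' by (meson order_antisym)
  ultimately show False using pos by simp
qed

lemma affine_fun_derivative:
  fixes \<phi> :: "'b::euclidean_space \<Rightarrow> real"
  assumes "affine_fun \<phi>" "(\<phi> has_derivative D) (at y)"
  shows "linear D" "\<phi> y' = \<phi> y + D (y' - y)"
proof -
  obtain l c where l: "linear l" "\<And>y. \<phi> y = l y + c" using assms(1) unfolding affine_fun_def by blast
  have "\<phi> = (\<lambda>y. l y + c)" using l(2) by auto
  moreover have "bounded_linear l" using l(1) linear_conv_bounded_linear by blast
  ultimately have "(\<phi> has_derivative l) (at y)"
    using has_derivative_add_const[OF bounded_linear_imp_has_derivative] by simp
  then have "D = l" using has_derivative_unique assms(2) by blast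
  then show "linear D" "\<phi> y' = \<phi> y + D (y' - y)" using l by (simp_all add: linear_diff)
qed

lemma affine_fun_convex_on:
  fixes \<phi> :: "'b::real_vector \<Rightarrow> real"
  assumes "affine_fun \<phi>"
  shows "convex_on UNIV \<phi>"
proof (rule convex_onI)
  fix t :: real and a b :: 'b
  obtain l c where l: "linear l" "\<And>y. \<phi> y = l y + c" using assms unfolding affine_fun_def by blast
  have "l ((1 - t) *\<^sub>R a + t *\<^sub>R b) = (1 - t) * l a + t * l b"
    by (simp add: linear_add[OF l(1)] linear_cmul[OF l(1)])
  then show "\<phi> ((1 - t) *\<^sub>R a + t *\<^sub>R b) \<le> (1 - t) * \<phi> a + t * \<phi> b"
    by (simp add: l algebra_simps)
qed simp

lemma convex_Yset:
  assumes "\<And>i. i < k \<Longrightarrow> convex_on UNIV (h i x)"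
  shows "convex (Yset h k x)"
proof (rule convexI)
  fix a b and u v :: real assume ab: "a \<in> Yset h k x" "b \<in> Yset h k x"
    and uv: "0 \<le> u" "0 \<le> v" "u + v = 1"
  have "h i x (u *\<^sub>R a + v *\<^sub>R b) \<le> 0" if i: "i < k" for i
  proof -
    have "h i x ((1 - v) *\<^sub>R a + v *\<^sub>R b) \<le> (1 - v) * h i x a + v * h i x b"
      using convex_onD[OF assms[OF i], of v a b] uv by auto
    moreover have "(1 - v) * h i x a + v * h i x b \<le> 0"
      using ab i uv by (auto simp: Yset_def intro!: add_nonpos_nonpos mult_nonneg_nonpos)
    moreover have "1 - v = u" using uv by simp
    ultimately show ?thesis by simp
  qed
  then show "u *\<^sub>R a + v *\<^sub>R b \<in> Yset h k x" unfolding Yset_def by blast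
qed

lemma closed_Yset:
  assumes "\<And>i. i < k \<Longrightarrow> continuous_on UNIV (h i x)"
  shows "closed (Yset h k x)"
proof -
  have "Yset h k x = (\<Inter>i\<in>{..<k}. {y. h i x y \<le> 0})" unfolding Yset_def by auto
  also have "closed \<dots>"
    by (rule closed_INT) (auto intro!: closed_Collect_le assms continuous_on_const)
  finally show ?thesis .
qed

lemma strongly_convex_ystar_unique:
  assumes "strongly_convex \<mu> (g x)" "\<And>i. i < k \<Longrightarrow> convex_on UNIV (h i x)"
    and "y \<in> ystar g h k x" "y' \<in> ystar g h k x"
  shows "y = y'"
  using strongly_convex_min_unique[OF assms(1) convex_Yset[of k h x, OF assms(2)]] assms(3,4)
  unfolding ystar_def by blast

section \<open>KKT conditions of a convex program\<close>

definition active_set :: "(nat \<Rightarrow> 'a \<Rightarrow> 'b \<Rightarrow> real) \<Rightarrow> nat \<Rightarrow> 'a \<Rightarrow> 'b \<Rightarrow> nat set" where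
  "active_set h k x y = {i. i < k \<and> h i x y = 0}"

lemma finite_active_set [simp]: "finite (active_set h k x y)"
  unfolding active_set_def by simp

lemma active_set_subset: "active_set h k x y \<subseteq> {..<k}"
  unfolding active_set_def by auto

lemma no_strict_descent_direction:
  fixes g :: "'b::real_normed_vector \<Rightarrow> real" and h :: "nat \<Rightarrow> 'b \<Rightarrow> real"
  assumes feas: "\<forall>i<k. h i y \<le> 0"
    and opt: "\<forall>y'. (\<forall>i<k. h i y' \<le> 0) \<longrightarrow> g y \<le> g y'"
    and dg: "(g has_derivative Dg) (at y)"
    and dh: "\<And>i. i < k \<Longrightarrow> (h i has_derivative Dh i) (at y)"
    and d: "\<forall>i<k. h i y = 0 \<longrightarrow> Dh i d < 0"
  shows "Dg d \<ge> 0"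
proof (rule ccontr)
  assume "\<not> Dg d \<ge> 0"
  then have "eventually (\<lambda>t. g (y + t *\<^sub>R d) < g y) (at_right 0)"
    using eventually_at_right_less_of_negative_deriv[OF has_real_derivative_along_line[OF dg]] by simp
  moreover have "\<forall>i\<in>{..<k}. eventually (\<lambda>t. h i (y + t *\<^sub>R d) < 0) (at_right 0)"
  proof
    fix i assume "i \<in> {..<k}"
    then have i: "i < k" by simp
    note deriv = has_real_derivative_along_line[OF dh[OF i], of d]
    show "eventually (\<lambda>t. h i (y + t *\<^sub>R d) < 0) (at_right 0)"
    proof (cases "h i y = 0")
      case True
      then show ?thesis using eventually_at_right_less_of_negative_deriv[OF deriv] d i by simp
    next
      case False
      then have "h i y < 0" using feas i by (simp add: less_le)
      moreover have "((\<lambda>t. h i (y + t *\<^sub>R d)) \<longlongrightarrow> h i y) (at 0)"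
        using DERIV_isCont[OF deriv] by (simp add: isCont_def)
      then have "((\<lambda>t. h i (y + t *\<^sub>R d)) \<longlongrightarrow> h i y) (at_right 0)"
        by (rule tendsto_within_subset) auto
      ultimately show ?thesis using order_tendstoD(2) by blast
    qed
  qed
  then have "eventually (\<lambda>t. \<forall>i\<in>{..<k}. h i (y + t *\<^sub>R d) < 0) (at_right 0)"
    by (rule eventually_ball_finite[OF finite_lessThan])
  ultimately have "eventually (\<lambda>t. g (y + t *\<^sub>R d) < g y \<and> (\<forall>i\<in>{..<k}. h i (y + t *\<^sub>R d) < 0)) (at_right 0)"
    by (rule eventually_conj)
  then obtain t where t: "g (y + t *\<^sub>R d) < g y" "\<forall>i\<in>{..<k}. h i (y + t *\<^sub>R d) < 0"
    using eventually_happens'[OF trivial_limit_at_right_real] by blast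
  then have "\<forall>i<k. h i (y + t *\<^sub>R d) \<le> 0" by (simp add: less_imp_le)
  then show False using opt t(1) by (simp add: not_le[symmetric])
qed

text \<open>Moving \<open>d\<close> slightly towards a Slater point makes every active constraint decrease
  strictly, so the non-strict statement follows from the strict one in the limit.\<close>

lemma slater_no_descent_direction:
  fixes g :: "'b::real_normed_vector \<Rightarrow> real" and h :: "nat \<Rightarrow> 'b \<Rightarrow> real"
  assumes feas: "\<forall>i<k. h i y \<le> 0"
    and opt: "\<forall>y'. (\<forall>i<k. h i y' \<le> 0) \<longrightarrow> g y \<le> g y'"
    and dg: "(g has_derivative Dg) (at y)"
    and dh: "\<And>i. i < k \<Longrightarrow> (h i has_derivative Dh i) (at y)"
    and cvx: "\<And>i. i < k \<Longrightarrow> convex_on UNIV (h i)"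
    and slater: "\<forall>i<k. h i y1 < 0"
    and d: "\<forall>i<k. h i y = 0 \<longrightarrow> Dh i d \<le> 0"
  shows "Dg d \<ge> 0"
proof -
  note lin_g = has_derivative_linear[OF dg] and lin_h = has_derivative_linear[OF dh]
  have slater_dir: "Dh i (y1 - y) < 0" if "i < k" "h i y = 0" for i
    using convex_on_ge_linearization[OF cvx dh, of i y1] slater that by force
  have "eventually (\<lambda>\<epsilon>. 0 \<le> Dg d + \<epsilon> * Dg (y1 - y)) (at_right 0)"
    unfolding eventually_at_right_field
  proof (intro exI[of _ 1] conjI allI impI)
    fix \<epsilon> :: real assume "0 < \<epsilon>" "\<epsilon> < 1"
    then have "\<forall>i<k. h i y = 0 \<longrightarrow> Dh i (d + \<epsilon> *\<^sub>R (y1 - y)) < 0"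
      using d slater_dir lin_h by (simp add: linear_add linear_cmul add_nonpos_neg mult_pos_neg)
    from no_strict_descent_direction[OF feas opt dg dh this]
    show "0 \<le> Dg d + \<epsilon> * Dg (y1 - y)" by (simp add: linear_add[OF lin_g] linear_cmul[OF lin_g])
  qed simp
  moreover have "((\<lambda>\<epsilon>. Dg d + \<epsilon> * Dg (y1 - y)) \<longlongrightarrow> Dg d) (at_right 0)"
    by (auto intro!: tendsto_eq_intros)
  ultimately show ?thesis
    using tendsto_lowerbound trivial_limit_at_right_real by blast
qed

lemma convex_KKT_exists:
  fixes g :: "'b::euclidean_space \<Rightarrow> real" and h :: "nat \<Rightarrow> 'b \<Rightarrow> real"
  assumes feas: "\<forall>i<k. h i y \<le> 0"
    and opt: "\<forall>y'. (\<forall>i<k. h i y' \<le> 0) \<longrightarrow> g y \<le> g y'"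
    and dg: "(g has_derivative Dg) (at y)"
    and dh: "\<And>i. i < k \<Longrightarrow> (h i has_derivative Dh i) (at y)"
    and cvx: "\<And>i. i < k \<Longrightarrow> convex_on UNIV (h i)"
    and slater: "\<forall>i<k. h i y1 < 0"
    and licq: "independent_family {i. i < k \<and> h i y = 0} (\<lambda>i. \<Sum>b\<in>Basis. Dh i b *\<^sub>R b)"
  obtains lam where "\<forall>i\<ge>k. lam i = 0" "\<forall>i<k. lam i \<ge> 0 \<and> lam i * h i y = 0"
    "\<forall>v. Dg v + (\<Sum>i<k. lam i * Dh i v) = 0"
proof -
  define A where "A = {i. i < k \<and> h i y = 0}"
  define a where "a i = (\<Sum>b\<in>Basis. Dh i b *\<^sub>R b)" for i
  define c where "c = (\<Sum>b\<in>Basis. Dg b *\<^sub>R b)"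
  have Dgc: "Dg v = c \<bullet> v" for v
    unfolding c_def by (rule linear_eq_inner_gradient[OF has_derivative_linear[OF dg]])
  have Dha: "Dh i v = a i \<bullet> v" if "i < k" for i v
    unfolding a_def by (rule linear_eq_inner_gradient[OF has_derivative_linear[OF dh[OF that]]])
  have "c \<bullet> d \<ge> 0" if "\<forall>i\<in>A. a i \<bullet> d \<le> 0" for d
    using slater_no_descent_direction[OF feas opt dg dh cvx slater, of d] that
    by (simp add: A_def Dgc Dha)
  then obtain l where l: "\<forall>i\<in>A. l i \<ge> 0" "c = - (\<Sum>i\<in>A. l i *\<^sub>R a i)"
    using independent_family_farkas[of A a] licq unfolding A_def a_def by auto
  define lam where "lam i = (if i \<in> A then l i else 0)" for i
  have "Dg v + (\<Sum>i<k. lam i * Dh i v) = 0" for v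
  proof -
    have "(\<Sum>i<k. lam i * Dh i v) = (\<Sum>i\<in>A. lam i * Dh i v)"
      by (rule sum.mono_neutral_right) (auto simp: lam_def A_def)
    also have "\<dots> = (\<Sum>i\<in>A. l i * (a i \<bullet> v))"
      by (rule sum.cong) (auto simp: lam_def A_def Dha)
    finally show ?thesis by (simp add: Dgc l(2) inner_sum_left)
  qed
  moreover have "\<forall>i\<ge>k. lam i = 0" "\<forall>i<k. lam i \<ge> 0 \<and> lam i * h i y = 0"
    using l(1) unfolding lam_def A_def by auto
  ultimately show ?thesis using that by blast
qed

lemma convex_KKT_sufficient:
  fixes g :: "'b::real_normed_vector \<Rightarrow> real" and h :: "'i \<Rightarrow> 'b \<Rightarrow> real"
  assumes "convex_on UNIV g" and "(g has_derivative Dg) (at y)"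
    and cvx: "\<And>i. i \<in> A \<Longrightarrow> convex_on UNIV (h i)" and dh: "\<And>i. i \<in> A \<Longrightarrow> (h i has_derivative Dh i) (at y)"
    and act: "\<And>i. i \<in> A \<Longrightarrow> h i y = 0" and lam: "\<And>i. i \<in> A \<Longrightarrow> lam i \<ge> 0"
    and kkt: "\<And>v. Dg v + (\<Sum>i\<in>A. lam i * Dh i v) = 0"
    and y': "\<And>i. i \<in> A \<Longrightarrow> h i y' \<le> 0"
  shows "g y \<le> g y'"
proof -
  have "Dh i (y' - y) \<le> 0" if i: "i \<in> A" for i
    using convex_on_ge_linearization[OF cvx[OF i] dh[OF i], of y'] act[OF i] y'[OF i] by simp
  then have "(\<Sum>i\<in>A. lam i * Dh i (y' - y)) \<le> 0"
    by (intro sum_nonpos) (use lam in \<open>auto intro: mult_nonneg_nonpos\<close>)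
  then show ?thesis using convex_on_ge_linearization[OF assms(1,2), of y'] kkt[of "y' - y"] by linarith
qed

lemma KKT_mult_unique:
  assumes licq: "LICQ h k x y" and l1: "KKT_mult g h k x y l1" and l2: "KKT_mult g h k x y l2"
  shows "l1 = l2"
proof
  fix i
  let ?D = "\<lambda>i. frechet_derivative (h i x) (at y)"
  have stationary: "frechet_derivative (g x) (at y) v + (\<Sum>i<k. l i * ?D i v) = 0"
    if "KKT_mult g h k x y l" for l v
    using that unfolding KKT_mult_def by blast
  have inactive: "l i = 0" if "KKT_mult g h k x y l" "\<not> (i < k \<and> h i x y = 0)" for l i
    using that unfolding KKT_mult_def by (cases "i < k") auto
  have "\<forall>v. (\<Sum>i\<in>{i. i < k \<and> h i x y = 0}. (l1 i - l2 i) * ?D i v) = 0"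
  proof
    fix v
    have "(\<Sum>i\<in>{i. i < k \<and> h i x y = 0}. (l1 i - l2 i) * ?D i v) = (\<Sum>i<k. (l1 i - l2 i) * ?D i v)"
      by (rule sum.mono_neutral_left) (use inactive[OF l1] inactive[OF l2] in auto)
    also have "\<dots> = (\<Sum>i<k. l1 i * ?D i v) - (\<Sum>i<k. l2 i * ?D i v)"
      by (simp add: left_diff_distrib sum_subtractf)
    also have "\<dots> = 0" using stationary[OF l1, of v] stationary[OF l2, of v] by simp
    finally show "(\<Sum>i\<in>{i. i < k \<and> h i x y = 0}. (l1 i - l2 i) * ?D i v) = 0" .
  qed
  then have "\<forall>i. i < k \<and> h i x y = 0 \<longrightarrow> l1 i - l2 i = 0"
    using licq[unfolded LICQ_def, rule_format, of "\<lambda>i. l1 i - l2 i"] by blast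
  then show "l1 i = l2 i" using inactive[OF l1] inactive[OF l2] by (cases "i < k \<and> h i x y = 0") auto
qed

lemma KKT_mult_kkt_lambda:
  assumes "LICQ h k x y" "KKT_mult g h k x y l"
  shows "KKT_mult g h k x y (kkt_lambda g h k x y)"
  unfolding kkt_lambda_def
proof (rule theI[where P = "KKT_mult g h k x y"])
  show "KKT_mult g h k x y l" by (fact assms(2))
next
  fix l' assume "KKT_mult g h k x y l'"
  then show "l' = l" using KKT_mult_unique[OF assms(1) _ assms(2)] by blast
qed

section \<open>The parametric lower-level problem\<close>

lemma grad_ystar_existsI:
  assumes "e > 0" "Y differentiable (at x)" "\<And>x'. x' \<in> X \<inter> ball x e \<Longrightarrow> ystar g h k x' = {Y x'}"
  shows "grad_ystar_exists g h k X x"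
  using assms differentiable_at_withinI unfolding grad_ystar_exists_def by blast

lemma grad_ystar_exists_imp_singleton:
  assumes "x \<in> X" "grad_ystar_exists g h k X x"
  shows "\<exists>y. ystar g h k x = {y}"
  using assms unfolding grad_ystar_exists_def by auto

locale lower_level =
  fixes g :: "'a::euclidean_space \<Rightarrow> 'b::euclidean_space \<Rightarrow> real"
    and h :: "nat \<Rightarrow> 'a \<Rightarrow> 'b \<Rightarrow> real" and k :: nat and X :: "'a set"
    and G1 :: "'a \<times> 'b \<Rightarrow> ('a \<times> 'b) \<Rightarrow>\<^sub>L real"
    and G2 :: "'a \<times> 'b \<Rightarrow> ('a \<times> 'b) \<Rightarrow>\<^sub>L ('a \<times> 'b) \<Rightarrow>\<^sub>L real"
    and H1 :: "nat \<Rightarrow> 'a \<times> 'b \<Rightarrow> ('a \<times> 'b) \<Rightarrow>\<^sub>L real"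
    and H2 :: "nat \<Rightarrow> 'a \<times> 'b \<Rightarrow> ('a \<times> 'b) \<Rightarrow>\<^sub>L ('a \<times> 'b) \<Rightarrow>\<^sub>L real"
  assumes G1: "\<And>z. (case_prod g has_derivative blinfun_apply (G1 z)) (at z)"
    and G2: "\<And>z. (G1 has_derivative blinfun_apply (G2 z)) (at z)"
    and G2_cont: "continuous_on UNIV G2"
    and H1: "\<And>i z. i < k \<Longrightarrow> (case_prod (h i) has_derivative blinfun_apply (H1 i z)) (at z)"
    and H2: "\<And>i z. i < k \<Longrightarrow> (H1 i has_derivative blinfun_apply (H2 i z)) (at z)"
    and H2_cont: "\<And>i. i < k \<Longrightarrow> continuous_on UNIV (H2 i)"
    and A2: "A2 h k X" and A3: "A3 g h k X"

lemma lower_levelI: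
  fixes g :: "'a::euclidean_space \<Rightarrow> 'b::euclidean_space \<Rightarrow> real"
  assumes "A1 f g h k" "A2 h k X" "A3 g h k X"
  obtains G1 G2 H1 H2 where "lower_level g h k X G1 G2 H1 H2"
proof -
  from assms(1) have g: "C2_fun (case_prod g)" and h: "\<forall>i<k. C2_fun (case_prod (h i))"
    unfolding A1_def by auto
  obtain G1 G2 where G: "\<forall>z. (case_prod g has_derivative blinfun_apply (G1 z)) (at z)"
    "\<forall>z. (G1 has_derivative blinfun_apply (G2 z)) (at z)" "continuous_on UNIV G2"
    using g unfolding C2_fun_def by blast
  have "\<forall>i. \<exists>F' F''. i < k \<longrightarrow> (\<forall>z. (case_prod (h i) has_derivative blinfun_apply (F' z)) (at z)) \<and>
      (\<forall>z. (F' has_derivative blinfun_apply (F'' z)) (at z)) \<and> continuous_on UNIV F''"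
    using h unfolding C2_fun_def by blast
  then obtain H1 where "\<forall>i. \<exists>F''. i < k \<longrightarrow> (\<forall>z. (case_prod (h i) has_derivative blinfun_apply (H1 i z)) (at z)) \<and>
      (\<forall>z. (H1 i has_derivative blinfun_apply (F'' z)) (at z)) \<and> continuous_on UNIV F''"
    by (rule choice[THEN exE])
  then obtain H2 where "\<forall>i. i < k \<longrightarrow> (\<forall>z. (case_prod (h i) has_derivative blinfun_apply (H1 i z)) (at z)) \<and>
      (\<forall>z. (H1 i has_derivative blinfun_apply (H2 i z)) (at z)) \<and> continuous_on UNIV (H2 i)"
    by (rule choice[THEN exE])
  with G assms(2,3) show ?thesis by (intro that[of G1 G2 H1 H2]) (unfold_locales, auto)
qed

context lower_level
begin

lemma g_partial: "(g x has_derivative (\<lambda>v. G1 (x, y) (0, v))) (at y)"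
  by (rule has_derivative_partial_snd[OF G1])

lemma h_partial: "i < k \<Longrightarrow> (h i x has_derivative (\<lambda>v. H1 i (x, y) (0, v))) (at y)"
  by (rule has_derivative_partial_snd[OF H1])

lemma frechet_derivative_g: "frechet_derivative (g x) (at y) = (\<lambda>v. G1 (x, y) (0, v))"
  using frechet_derivative_at[OF g_partial] by simp

lemma frechet_derivative_h: "i < k \<Longrightarrow> frechet_derivative (h i x) (at y) = (\<lambda>v. H1 i (x, y) (0, v))"
  using frechet_derivative_at[OF h_partial] by simp

lemma continuous_on_g: "continuous_on UNIV (g x)"
  by (rule has_derivative_continuous_on) (use g_partial in blast)

lemma continuous_on_h: "i < k \<Longrightarrow> continuous_on UNIV (h i x)"
  by (rule has_derivative_continuous_on) (use h_partial in blast)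

lemma slater_point:
  assumes "x \<in> X"
  obtains y1 where "\<forall>i<k. h i x y1 < 0"
  using A2 assms unfolding A2_def by blast

lemma slater_point_in_Yset:
  assumes "\<forall>i<k. h i x y1 < 0"
  shows "y1 \<in> Yset h k x"
  using assms unfolding Yset_def by (auto intro: less_imp_le)

lemma LICQ_iff:
  "LICQ h k x y \<longleftrightarrow> independent_family (active_set h k x y) (\<lambda>i. partial_grad (H1 i (x, y)))"
proof -
  let ?A = "active_set h k x y"
  have "(\<Sum>i\<in>?A. c i * frechet_derivative (h i x) (at y) v) = (\<Sum>i\<in>?A. c i *\<^sub>R partial_grad (H1 i (x, y))) \<bullet> v"
    for c v unfolding inner_sum_left
    by (rule sum.cong) (auto simp: active_set_def inner_partial_grad frechet_derivative_h)
  then have "(\<forall>v. (\<Sum>i\<in>?A. c i * frechet_derivative (h i x) (at y) v) = 0) \<longleftrightarrow>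
      (\<Sum>i\<in>?A. c i *\<^sub>R partial_grad (H1 i (x, y))) = 0" for c
    by (simp add: all_inner_eq_0_iff)
  moreover have "(\<forall>i. i < k \<and> h i x y = 0 \<longrightarrow> c i = 0) \<longleftrightarrow> (\<forall>i\<in>?A. c i = 0)" for c :: "nat \<Rightarrow> real"
    unfolding active_set_def by blast
  ultimately show ?thesis
    unfolding LICQ_def independent_family_def active_set_def[symmetric] by presburger
qed

lemma KKT_mult_iff:
  "KKT_mult g h k x y lam \<longleftrightarrow> (\<forall>i\<ge>k. lam i = 0) \<and> (\<forall>i<k. lam i \<ge> 0 \<and> lam i * h i x y = 0) \<and>
     (\<forall>v. G1 (x, y) (0, v) + (\<Sum>i<k. lam i * H1 i (x, y) (0, v)) = 0)"
proof -
  have "(\<Sum>i<k. lam i * frechet_derivative (h i x) (at y) v) = (\<Sum>i<k. lam i * H1 i (x, y) (0, v))" for v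
    by (rule sum.cong) (auto simp: frechet_derivative_h)
  then show ?thesis unfolding KKT_mult_def by (simp add: frechet_derivative_g)
qed

definition equality_KKT :: "nat set \<Rightarrow> 'a \<Rightarrow> 'b \<Rightarrow> (nat \<Rightarrow> real) \<Rightarrow> bool" where
  "equality_KKT A x y lam \<longleftrightarrow> (\<forall>v. G1 (x, y) (0, v) + (\<Sum>i\<in>A. lam i * H1 i (x, y) (0, v)) = 0) \<and>
     (\<forall>i\<in>A. h i x y = 0)"

lemma equality_KKT_cong:
  "(\<And>i. i \<in> A \<Longrightarrow> lam i = lam' i) \<Longrightarrow> equality_KKT A x y lam \<longleftrightarrow> equality_KKT A x y lam'"
  unfolding equality_KKT_def by (simp cong: sum.cong)

lemma KKT_mult_imp_equality_KKT:
  assumes "KKT_mult g h k x y lam"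
  shows "equality_KKT (active_set h k x y) x y lam"
proof -
  have stat: "\<forall>v. G1 (x, y) (0, v) + (\<Sum>i<k. lam i * H1 i (x, y) (0, v)) = 0"
    and compl: "\<forall>i<k. lam i * h i x y = 0" using assms unfolding KKT_mult_iff by auto
  have "(\<Sum>i<k. lam i * H1 i (x, y) (0, v)) = (\<Sum>i\<in>active_set h k x y. lam i * H1 i (x, y) (0, v))" for v
    by (rule sum.mono_neutral_right) (use compl in \<open>auto simp: active_set_def\<close>)
  with stat show ?thesis unfolding equality_KKT_def by (simp add: active_set_def)
qed

lemma KKT_mult_kkt_lambda_ystar:
  assumes x: "x \<in> X" and cvx: "\<And>i. i < k \<Longrightarrow> convex_on UNIV (h i x)" and y: "y \<in> ystar g h k x"
  shows "KKT_mult g h k x y (kkt_lambda g h k x y)"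
proof -
  have licq: "LICQ h k x y" using A3 x y unfolding A3_def by blast
  then have licq': "independent_family {i. i < k \<and> h i x y = 0} (\<lambda>i. \<Sum>b\<in>Basis. H1 i (x, y) (0, b) *\<^sub>R b)"
    unfolding LICQ_iff active_set_def partial_grad_def .
  obtain y1 where y1: "\<forall>i<k. h i x y1 < 0" using slater_point[OF x] .
  have feas: "\<forall>i<k. h i x y \<le> 0" and opt: "\<forall>y'. (\<forall>i<k. h i x y' \<le> 0) \<longrightarrow> g x y \<le> g x y'"
    using y unfolding ystar_def Yset_def by auto
  obtain lam where "\<forall>i\<ge>k. lam i = 0" "\<forall>i<k. lam i \<ge> 0 \<and> lam i * h i x y = 0"
    "\<forall>v. G1 (x, y) (0, v) + (\<Sum>i<k. lam i * H1 i (x, y) (0, v)) = 0"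
    by (rule convex_KKT_exists[OF feas opt g_partial h_partial cvx y1 licq'])
  then have "KKT_mult g h k x y lam" unfolding KKT_mult_iff by blast
  then show ?thesis by (rule KKT_mult_kkt_lambda[OF licq])
qed

lemma equality_KKT_imp_ystar:
  assumes cvx: "convex_on UNIV (g x)" "\<And>i. i < k \<Longrightarrow> convex_on UNIV (h i x)" and A: "A \<subseteq> {..<k}"
    and kkt: "equality_KKT A x y lam" and lam: "\<And>i. i \<in> A \<Longrightarrow> lam i \<ge> 0"
    and inactive: "\<And>i. i < k \<Longrightarrow> i \<notin> A \<Longrightarrow> h i x y < 0"
  shows "y \<in> ystar g h k x"
proof -
  have stat: "\<And>v. G1 (x, y) (0, v) + (\<Sum>i\<in>A. lam i * H1 i (x, y) (0, v)) = 0"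
    and act: "\<And>i. i \<in> A \<Longrightarrow> h i x y = 0" using kkt unfolding equality_KKT_def by auto
  have "h i x y \<le> 0" if "i < k" for i
    using act inactive[OF that] by (cases "i \<in> A") auto
  moreover have "g x y \<le> g x y'" if "y' \<in> Yset h k x" for y'
  proof (rule convex_KKT_sufficient[where h = "\<lambda>i. h i x" and Dh = "\<lambda>i v. H1 i (x, y) (0, v)",
        OF cvx(1) g_partial _ _ act lam stat])
    show "convex_on UNIV (h i x)" "(h i x has_derivative (\<lambda>v. H1 i (x, y) (0, v))) (at y)"
      "h i x y' \<le> 0" if "i \<in> A" for i
      using that A cvx(2) h_partial \<open>y' \<in> Yset h k x\<close> unfolding Yset_def by auto
  qed
  ultimately show ?thesis unfolding ystar_def Yset_def by auto
qed

text \<open>The system \<open>equality_KKT\<close>, made square in the unknowns \<open>(y, w) \<in> 'b \<times> 'b\<close>, with \<open>x\<close> carried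
  along as the parameter: the multiplier of constraint \<open>i \<in> A\<close> is the coordinate \<open>w \<bullet> \<sigma> i\<close> along
  a basis vector \<open>\<sigma> i\<close>, and the coordinates of \<open>w\<close> along the remaining basis vectors must vanish.\<close>

definition kkt_map :: "nat set \<Rightarrow> (nat \<Rightarrow> 'b) \<Rightarrow> 'a \<times> 'b \<times> 'b \<Rightarrow> 'a \<times> 'b \<times> 'b" where
  "kkt_map A \<sigma> z =
    (fst z,
     partial_grad (G1 (pair_xy z)) + (\<Sum>i\<in>A. (snd (snd z) \<bullet> \<sigma> i) *\<^sub>R partial_grad (H1 i (pair_xy z))),
     (\<Sum>i\<in>A. case_prod (h i) (pair_xy z) *\<^sub>R \<sigma> i) + (\<Sum>b\<in>Basis - \<sigma> ` A. (snd (snd z) \<bullet> b) *\<^sub>R b))"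

definition kkt_map_deriv :: "nat set \<Rightarrow> (nat \<Rightarrow> 'b) \<Rightarrow> 'a \<times> 'b \<times> 'b \<Rightarrow> 'a \<times> 'b \<times> 'b \<Rightarrow> 'a \<times> 'b \<times> 'b" where
  "kkt_map_deriv A \<sigma> z u =
    (fst u,
     partial_grad (G2 (pair_xy z) (pair_xy u)) +
       (\<Sum>i\<in>A. (snd (snd z) \<bullet> \<sigma> i) *\<^sub>R partial_grad (H2 i (pair_xy z) (pair_xy u)) +
                (snd (snd u) \<bullet> \<sigma> i) *\<^sub>R partial_grad (H1 i (pair_xy z))),
     (\<Sum>i\<in>A. H1 i (pair_xy z) (pair_xy u) *\<^sub>R \<sigma> i) + (\<Sum>b\<in>Basis - \<sigma> ` A. (snd (snd u) \<bullet> b) *\<^sub>R b))"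

lemma fst_kkt_map: "fst (kkt_map A \<sigma> z) = fst z"
  unfolding kkt_map_def by simp

lemma kkt_map_has_derivative:
  assumes A: "A \<subseteq> {..<k}"
  shows "(kkt_map A \<sigma> has_derivative kkt_map_deriv A \<sigma> z) (at z)"
proof -
  have G1P: "((\<lambda>z. partial_grad (G1 (pair_xy z))) has_derivative
      (\<lambda>u. partial_grad (G2 (pair_xy z) (pair_xy u)))) (at z)"
    using diff_chain_at[OF has_derivative_pair_xy
        bounded_linear.has_derivative[OF bounded_linear_partial_grad G2]]
    by (simp add: o_def)
  have H1P: "((\<lambda>z. partial_grad (H1 i (pair_xy z))) has_derivative
      (\<lambda>u. partial_grad (H2 i (pair_xy z) (pair_xy u)))) (at z)"
    if "i \<in> A" for i
  proof -
    have "i < k" using that A by auto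
    from diff_chain_at[OF has_derivative_pair_xy
        bounded_linear.has_derivative[OF bounded_linear_partial_grad H2[OF this]]]
    show ?thesis by (simp add: o_def)
  qed
  have hP: "((\<lambda>z. case_prod (h i) (pair_xy z)) has_derivative (\<lambda>u. H1 i (pair_xy z) (pair_xy u))) (at z)"
    if "i \<in> A" for i
  proof -
    have "i < k" using that A by auto
    from diff_chain_at[OF has_derivative_pair_xy H1[OF this]] show ?thesis by (simp add: o_def)
  qed
  show ?thesis
    unfolding kkt_map_def[abs_def] kkt_map_deriv_def
    by (intro has_derivative_Pair has_derivative_add has_derivative_sum has_derivative_scaleR G1P H1P
        has_derivative_fst[OF has_derivative_ident] has_derivative_snd has_derivative_ident
        bounded_linear.has_derivative[OF bounded_linear_scaleR_left] hP
        bounded_linear.has_derivative[OF bounded_linear_inner_left] has_derivative_const)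
      simp_all
qed

lemma continuous_on_kkt_map_deriv:
  assumes A: "A \<subseteq> {..<k}"
  shows "continuous_on UNIV (\<lambda>z. kkt_map_deriv A \<sigma> z u)"
proof -
  have H1_cont: "continuous_on UNIV (H1 i)" if "i < k" for i
    by (rule has_derivative_continuous_on) (use H2[OF that] in auto)
  note cont = continuous_on_compose2[OF _ continuous_on_pair_xy subset_UNIV]
  show ?thesis
    unfolding kkt_map_deriv_def
    by (intro continuous_intros bounded_linear.continuous_on[OF bounded_linear_partial_grad]
        cont[OF G2_cont] cont[OF H1_cont] cont[OF H2_cont]) (use A in auto)
qed

lemma kkt_map_eq_iff:
  assumes "finite A" "\<sigma> ` A \<subseteq> Basis" "inj_on \<sigma> A"
  shows "kkt_map A \<sigma> (x, y, w) = (x', 0, 0) \<longleftrightarrow>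
    x = x' \<and> equality_KKT A x y (\<lambda>i. w \<bullet> \<sigma> i) \<and> (\<forall>b\<in>Basis - \<sigma> ` A. w \<bullet> b = 0)"
proof -
  let ?S = "partial_grad (G1 (x, y)) + (\<Sum>i\<in>A. (w \<bullet> \<sigma> i) *\<^sub>R partial_grad (H1 i (x, y)))"
  have Sv: "?S \<bullet> v = G1 (x, y) (0, v) + (\<Sum>i\<in>A. (w \<bullet> \<sigma> i) * H1 i (x, y) (0, v))" for v
    by (simp add: inner_add_left inner_sum_left inner_partial_grad)
  have S: "?S = 0 \<longleftrightarrow> (\<forall>v. G1 (x, y) (0, v) + (\<Sum>i\<in>A. (w \<bullet> \<sigma> i) * H1 i (x, y) (0, v)) = 0)"
    using all_inner_eq_0_iff[of ?S] by (simp only: Sv)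
  have "kkt_map A \<sigma> (x, y, w) = (x', 0, 0) \<longleftrightarrow>
      x = x' \<and> ?S = 0 \<and> (\<Sum>i\<in>A. h i x y *\<^sub>R \<sigma> i) + (\<Sum>b\<in>Basis - \<sigma> ` A. (w \<bullet> b) *\<^sub>R b) = 0"
    by (simp only: kkt_map_def fst_conv snd_conv pair_xy_Pair prod.case prod.inject)
  also have "\<dots> \<longleftrightarrow> x = x' \<and> (\<forall>v. G1 (x, y) (0, v) + (\<Sum>i\<in>A. (w \<bullet> \<sigma> i) * H1 i (x, y) (0, v)) = 0) \<and>
      (\<forall>i\<in>A. h i x y = 0) \<and> (\<forall>b\<in>Basis - \<sigma> ` A. w \<bullet> b = 0)"
    by (simp only: S Basis_embedding_eq_0_iff[OF assms])
  finally show ?thesis unfolding equality_KKT_def by blast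
qed

lemma kkt_map_deriv_injective:
  assumes A: "A \<subseteq> {..<k}" and \<sigma>: "\<sigma> ` A \<subseteq> Basis" "inj_on \<sigma> A"
    and licq: "independent_family A (\<lambda>i. partial_grad (H1 i (x, y)))"
    and second_order: "\<And>dy. \<forall>i\<in>A. H1 i (x, y) (0, dy) = 0 \<Longrightarrow>
       G2 (x, y) (0, dy) (0, dy) + (\<Sum>i\<in>A. (w \<bullet> \<sigma> i) * H2 i (x, y) (0, dy) (0, dy)) = 0 \<Longrightarrow> dy = 0"
  shows "inj (kkt_map_deriv A \<sigma> (x, y, w))"
proof -
  have finA: "finite A" using A finite_subset by blast
  have "linear (kkt_map_deriv A \<sigma> (x, y, w))"
    using kkt_map_has_derivative[OF A] has_derivative_linear by blast
  moreover have "u = 0" if u0: "kkt_map_deriv A \<sigma> (x, y, w) u = 0" for u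
  proof -
    obtain dx dy dw where u: "u = (dx, dy, dw)" by (cases u) auto
    have dx: "dx = 0" using u0 unfolding u kkt_map_deriv_def by (simp add: zero_prod_def)
    have c2: "partial_grad (G2 (x, y) (0, dy)) + (\<Sum>i\<in>A. (w \<bullet> \<sigma> i) *\<^sub>R partial_grad (H2 i (x, y) (0, dy))
          + (dw \<bullet> \<sigma> i) *\<^sub>R partial_grad (H1 i (x, y))) = 0"
      and c3: "(\<Sum>i\<in>A. H1 i (x, y) (0, dy) *\<^sub>R \<sigma> i) + (\<Sum>b\<in>Basis - \<sigma> ` A. (dw \<bullet> b) *\<^sub>R b) = 0"
      using u0 unfolding u dx kkt_map_deriv_def by (simp_all add: zero_prod_def)
    have tangent: "\<forall>i\<in>A. H1 i (x, y) (0, dy) = 0" and dw_rest: "\<forall>b\<in>Basis - \<sigma> ` A. dw \<bullet> b = 0"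
      using c3 Basis_embedding_eq_0_iff[OF finA \<sigma>] by auto
    have "0 = (partial_grad (G2 (x, y) (0, dy)) + (\<Sum>i\<in>A. (w \<bullet> \<sigma> i) *\<^sub>R partial_grad (H2 i (x, y) (0, dy))
          + (dw \<bullet> \<sigma> i) *\<^sub>R partial_grad (H1 i (x, y)))) \<bullet> dy"
      by (simp add: c2)
    also have "\<dots> = G2 (x, y) (0, dy) (0, dy) + (\<Sum>i\<in>A. (w \<bullet> \<sigma> i) * H2 i (x, y) (0, dy) (0, dy))"
      using tangent by (simp add: inner_add_left inner_sum_left inner_partial_grad sum.distrib)
    finally have dy: "dy = 0" using second_order[OF tangent] by simp
    with c2 have sum_A: "(\<Sum>i\<in>A. (dw \<bullet> \<sigma> i) *\<^sub>R partial_grad (H1 i (x, y))) = 0"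
      by (simp add: zero_prod_def[symmetric] partial_grad_def)
    have dw_A: "dw \<bullet> \<sigma> i = 0" if "i \<in> A" for i
      using independent_familyD[OF licq sum_A that] .
    have "dw = 0"
    proof (rule euclidean_eqI)
      fix b :: 'b assume "b \<in> Basis"
      then show "dw \<bullet> b = 0 \<bullet> b" using dw_A dw_rest by (cases "b \<in> \<sigma> ` A") auto
    qed
    with dx dy show "u = 0" by (simp add: u zero_prod_def)
  qed
  ultimately show ?thesis by (simp add: linear_injective_0)
qed

lemma kkt_map_regular_zero:
  assumes A: "A \<subseteq> {..<k}" and kkt: "equality_KKT A x0 y0 lam0"
    and licq: "independent_family A (\<lambda>i. partial_grad (H1 i (x0, y0)))"
    and second_order: "\<forall>dy. (\<forall>i\<in>A. H1 i (x0, y0) (0, dy) = 0) \<longrightarrow>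
       G2 (x0, y0) (0, dy) (0, dy) + (\<Sum>i\<in>A. lam0 i * H2 i (x0, y0) (0, dy) (0, dy)) = 0 \<longrightarrow> dy = 0"
  obtains \<sigma> w0 where "\<sigma> ` A \<subseteq> Basis" "inj_on \<sigma> A" "\<And>i. i \<in> A \<Longrightarrow> w0 \<bullet> \<sigma> i = lam0 i"
    "kkt_map A \<sigma> (x0, y0, w0) = (x0, 0, 0)" "inj (kkt_map_deriv A \<sigma> (x0, y0, w0))"
proof -
  have finA: "finite A" using A finite_subset by blast
  obtain \<sigma> :: "nat \<Rightarrow> 'b" where \<sigma>: "\<sigma> ` A \<subseteq> Basis" "inj_on \<sigma> A"
    using Basis_embedding_exists[OF finA independent_family_card_le[OF finA licq]] .
  define w0 where "w0 = (\<Sum>i\<in>A. lam0 i *\<^sub>R \<sigma> i)"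
  have w0: "w0 \<bullet> \<sigma> i = lam0 i" if "i \<in> A" for i
    using inner_Basis_embedding(1)[OF finA \<sigma> that, of lam0 "\<lambda>_. 0"] unfolding w0_def by simp
  have "\<forall>b\<in>Basis - \<sigma> ` A. w0 \<bullet> b = 0"
    using inner_Basis_embedding(2)[OF finA \<sigma>, of _ lam0 "\<lambda>_. 0"] unfolding w0_def by simp
  then have "kkt_map A \<sigma> (x0, y0, w0) = (x0, 0, 0)"
    using kkt_map_eq_iff[OF finA \<sigma>] equality_KKT_cong[of A "\<lambda>i. w0 \<bullet> \<sigma> i" lam0] kkt w0 by simp
  moreover have "inj (kkt_map_deriv A \<sigma> (x0, y0, w0))"
  proof (rule kkt_map_deriv_injective[OF A \<sigma> licq])
    fix dy assume "\<forall>i\<in>A. H1 i (x0, y0) (0, dy) = 0"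
      "G2 (x0, y0) (0, dy) (0, dy) + (\<Sum>i\<in>A. (w0 \<bullet> \<sigma> i) * H2 i (x0, y0) (0, dy) (0, dy)) = 0"
    then show "dy = 0" using second_order w0 by (simp cong: sum.cong)
  qed
  ultimately show ?thesis using that \<sigma> w0 by blast
qed

lemma eventually_inactive:
  assumes "isCont Y x0" and "\<forall>i<k. i \<notin> A \<longrightarrow> h i x0 (Y x0) < 0"
  shows "eventually (\<lambda>x. \<forall>i\<in>{..<k} - A. h i x (Y x) < 0) (nhds x0)"
proof (rule eventually_ball_finite, simp, rule ballI)
  fix i assume i: "i \<in> {..<k} - A"
  have "isCont (\<lambda>x. (x, Y x)) x0" using assms(1) by (intro continuous_intros)
  moreover have "isCont (case_prod (h i)) (x0, Y x0)" using i has_derivative_continuous[OF H1] by auto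
  ultimately have "isCont (\<lambda>x. case_prod (h i) (x, Y x)) x0" by (rule isCont_o2)
  then show "eventually (\<lambda>x. h i x (Y x) < 0) (nhds x0)"
    using isCont_imp_eventually_nhds(1) assms(2) i by force
qed

lemma equality_KKT_local_solution:
  assumes A: "A \<subseteq> {..<k}"
    and kkt: "equality_KKT A x0 y0 lam0" and pos: "\<forall>i\<in>A. lam0 i > 0"
    and inactive: "\<forall>i<k. i \<notin> A \<longrightarrow> h i x0 y0 < 0"
    and licq: "independent_family A (\<lambda>i. partial_grad (H1 i (x0, y0)))"
    and second_order: "\<forall>dy. (\<forall>i\<in>A. H1 i (x0, y0) (0, dy) = 0) \<longrightarrow>
       G2 (x0, y0) (0, dy) (0, dy) + (\<Sum>i\<in>A. lam0 i * H2 i (x0, y0) (0, dy) (0, dy)) = 0 \<longrightarrow> dy = 0"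
  obtains e Y \<Lambda> where "e > 0" "Y differentiable (at x0)"
    "\<And>x. x \<in> ball x0 e \<Longrightarrow> equality_KKT A x (Y x) (\<Lambda> x)"
    "\<And>x i. x \<in> ball x0 e \<Longrightarrow> i \<in> A \<Longrightarrow> \<Lambda> x i > 0"
    "\<And>x i. x \<in> ball x0 e \<Longrightarrow> i < k \<Longrightarrow> i \<notin> A \<Longrightarrow> h i x (Y x) < 0"
    "\<And>x. x \<in> ball x0 e \<Longrightarrow> \<exists>\<epsilon>>0. \<forall>y. dist y (Y x) < \<epsilon> \<longrightarrow> equality_KKT A x y (\<Lambda> x) \<longrightarrow> y = Y x"
proof -
  have finA: "finite A" using A finite_subset by blast
  obtain \<sigma> w0 where \<sigma>: "\<sigma> ` A \<subseteq> Basis" "inj_on \<sigma> A" and w0: "\<And>i. i \<in> A \<Longrightarrow> w0 \<bullet> \<sigma> i = lam0 i"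
    and zero: "kkt_map A \<sigma> (x0, y0, w0) = (x0, 0, 0)" and inj: "inj (kkt_map_deriv A \<sigma> (x0, y0, w0))"
    by (rule kkt_map_regular_zero[OF A kkt licq second_order]) (rule that)
  note eq_iff = kkt_map_eq_iff[OF finA \<sigma>]
  have "kkt_map A \<sigma> (x0, y0, w0) = (x0, 0)" using zero by (simp add: zero_prod_def)
  from implicit_function
      [OF fst_kkt_map kkt_map_has_derivative[OF A] continuous_on_kkt_map_deriv[OF A] inj this]
  obtain e0 u where "e0 > 0" and u0: "u x0 = (y0, w0)" and du: "u differentiable (at x0)"
    and sol: "\<And>x. x \<in> ball x0 e0 \<Longrightarrow> kkt_map A \<sigma> (x, u x) = (x, 0)"
    and iso: "\<And>x. x \<in> ball x0 e0 \<Longrightarrow>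
      \<exists>\<epsilon>>0. \<forall>v. dist v (u x) < \<epsilon> \<longrightarrow> kkt_map A \<sigma> (x, v) = (x, 0) \<longrightarrow> v = u x"
    by blast
  define Y where "Y x = fst (u x)" for x
  define W where "W x = snd (u x)" for x
  define \<Lambda> where "\<Lambda> x i = W x \<bullet> \<sigma> i" for x i
  have u: "u x = (Y x, W x)" for x unfolding Y_def W_def by simp
  have dY: "Y differentiable (at x0)"
    unfolding Y_def[abs_def]
    using differentiable_chain_at[OF du differentiableI[OF has_derivative_fst[OF has_derivative_ident]]]
    by (simp add: o_def)
  have cont: "isCont u x0" by (rule differentiable_imp_continuous_within[OF du])
  have "eventually (\<lambda>x. x \<in> ball x0 e0 \<and> (\<forall>i\<in>A. \<Lambda> x i > 0) \<and> (\<forall>i\<in>{..<k} - A. h i x (Y x) < 0))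
      (nhds x0)"
  proof (intro eventually_conj)
    show "eventually (\<lambda>x. x \<in> ball x0 e0) (nhds x0)" using \<open>e0 > 0\<close> by (rule eventually_nhds_ball)
    show "eventually (\<lambda>x. \<forall>i\<in>A. \<Lambda> x i > 0) (nhds x0)"
      by (rule eventually_nhds_all_positive[OF finA])
        (use pos cont in \<open>auto simp: \<Lambda>_def W_def u0 w0 intro!: continuous_intros\<close>)
    show "eventually (\<lambda>x. \<forall>i\<in>{..<k} - A. h i x (Y x) < 0) (nhds x0)"
      by (rule eventually_inactive) (use cont inactive in \<open>auto simp: Y_def u0 intro!: continuous_intros\<close>)
  qed
  then obtain e where "e > 0"
    and e: "\<And>x. dist x x0 < e \<Longrightarrow> x \<in> ball x0 e0 \<and> (\<forall>i\<in>A. \<Lambda> x i > 0) \<and> (\<forall>i\<in>{..<k} - A. h i x (Y x) < 0)"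
    unfolding eventually_nhds_metric by blast
  show ?thesis
  proof (rule that[OF \<open>e > 0\<close> dY])
    fix x assume "x \<in> ball x0 e"
    then have "dist x x0 < e" by (simp add: dist_commute)
    then have x: "x \<in> ball x0 e0" "\<forall>i\<in>A. \<Lambda> x i > 0" "\<forall>i\<in>{..<k} - A. h i x (Y x) < 0"
      using e by blast+
    have sol_x: "equality_KKT A x (Y x) (\<Lambda> x) \<and> (\<forall>b\<in>Basis - \<sigma> ` A. W x \<bullet> b = 0)"
      using sol[OF x(1)] eq_iff unfolding u \<Lambda>_def by (simp add: zero_prod_def)
    then show "equality_KKT A x (Y x) (\<Lambda> x)" ..
    show "\<And>i. i \<in> A \<Longrightarrow> \<Lambda> x i > 0" "\<And>i. i < k \<Longrightarrow> i \<notin> A \<Longrightarrow> h i x (Y x) < 0" using x by auto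
    obtain \<epsilon> where "\<epsilon> > 0" and \<epsilon>: "\<And>v. dist v (u x) < \<epsilon> \<Longrightarrow> kkt_map A \<sigma> (x, v) = (x, 0) \<Longrightarrow> v = u x"
      using iso[OF x(1)] by blast
    have "y = Y x" if "dist y (Y x) < \<epsilon>" "equality_KKT A x y (\<Lambda> x)" for y
    proof -
      have "dist (y, W x) (u x) < \<epsilon>" using that(1) by (simp add: u dist_Pair_Pair)
      moreover have "kkt_map A \<sigma> (x, y, W x) = (x, 0)"
        using eq_iff that(2) sol_x unfolding \<Lambda>_def by (simp add: zero_prod_def)
      ultimately have "(y, W x) = u x" by (rule \<epsilon>)
      then show "y = Y x" by (simp add: u)
    qed
    with \<open>\<epsilon> > 0\<close> show "\<exists>\<epsilon>>0. \<forall>y. dist y (Y x) < \<epsilon> \<longrightarrow> equality_KKT A x y (\<Lambda> x) \<longrightarrow> y = Y x" by blast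
  qed
qed

lemma SCSC_local_solution:
  assumes cvx: "\<forall>x'\<in>X. convex_on UNIV (g x') \<and> (\<forall>i<k. convex_on UNIV (h i x'))"
    and x: "x \<in> X" and y0: "y0 \<in> ystar g h k x"
    and scsc: "\<forall>i\<in>active_set h k x y0. kkt_lambda g h k x y0 i > 0"
    and second_order: "\<forall>dy. (\<forall>i\<in>active_set h k x y0. H1 i (x, y0) (0, dy) = 0) \<longrightarrow>
       G2 (x, y0) (0, dy) (0, dy) +
         (\<Sum>i\<in>active_set h k x y0. kkt_lambda g h k x y0 i * H2 i (x, y0) (0, dy) (0, dy)) = 0 \<longrightarrow> dy = 0"
  obtains e Y \<Lambda> where "e > 0" "Y differentiable (at x)"
    "\<And>x'. x' \<in> X \<inter> ball x e \<Longrightarrow> Y x' \<in> ystar g h k x'"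
    "\<And>x'. x' \<in> ball x e \<Longrightarrow>
       equality_KKT (active_set h k x y0) x' (Y x') (\<Lambda> x') \<and> (\<forall>i\<in>active_set h k x y0. \<Lambda> x' i > 0)"
    "\<And>x'. x' \<in> ball x e \<Longrightarrow>
       \<exists>\<epsilon>>0. \<forall>y. dist y (Y x') < \<epsilon> \<longrightarrow> equality_KKT (active_set h k x y0) x' y (\<Lambda> x') \<longrightarrow> y = Y x'"
proof -
  let ?A = "active_set h k x y0"
  have "KKT_mult g h k x y0 (kkt_lambda g h k x y0)"
    using KKT_mult_kkt_lambda_ystar[OF x _ y0] cvx x by blast
  note kkt = KKT_mult_imp_equality_KKT[OF this]
  have licq: "independent_family ?A (\<lambda>i. partial_grad (H1 i (x, y0)))"
    using A3 x y0 unfolding A3_def LICQ_iff by blast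
  have inactive: "\<forall>i<k. i \<notin> ?A \<longrightarrow> h i x y0 < 0"
    using y0 unfolding ystar_def Yset_def active_set_def by (auto simp: less_le)
  obtain e Y \<Lambda> where e: "e > 0" "Y differentiable (at x)"
    and sol: "\<And>x'. x' \<in> ball x e \<Longrightarrow> equality_KKT ?A x' (Y x') (\<Lambda> x')"
      "\<And>x' i. x' \<in> ball x e \<Longrightarrow> i \<in> ?A \<Longrightarrow> \<Lambda> x' i > 0"
      "\<And>x' i. x' \<in> ball x e \<Longrightarrow> i < k \<Longrightarrow> i \<notin> ?A \<Longrightarrow> h i x' (Y x') < 0"
      "\<And>x'. x' \<in> ball x e \<Longrightarrow> \<exists>\<epsilon>>0. \<forall>y. dist y (Y x') < \<epsilon> \<longrightarrow> equality_KKT ?A x' y (\<Lambda> x') \<longrightarrow> y = Y x'"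
    by (rule equality_KKT_local_solution[OF active_set_subset kkt scsc inactive licq second_order])
      (rule that)
  show ?thesis
  proof (rule that[OF e])
    show "Y x' \<in> ystar g h k x'" if x': "x' \<in> X \<inter> ball x e" for x'
    proof (rule equality_KKT_imp_ystar[OF _ _ active_set_subset])
      show "convex_on UNIV (g x')" "\<And>i. i < k \<Longrightarrow> convex_on UNIV (h i x')" using cvx x' by auto
      show "equality_KKT ?A x' (Y x') (\<Lambda> x')" using sol(1) x' by blast
      show "\<And>i. i \<in> ?A \<Longrightarrow> 0 \<le> \<Lambda> x' i" using sol(2) x' by (blast intro: less_imp_le)
      show "\<And>i. i < k \<Longrightarrow> i \<notin> ?A \<Longrightarrow> h i x' (Y x') < 0" using sol(3) x' by blast
    qed
    show "equality_KKT ?A x' (Y x') (\<Lambda> x') \<and> (\<forall>i\<in>?A. \<Lambda> x' i > 0)" if "x' \<in> ball x e" for x'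
      using sol(1,2) that by blast
    show "\<exists>\<epsilon>>0. \<forall>y. dist y (Y x') < \<epsilon> \<longrightarrow> equality_KKT ?A x' y (\<Lambda> x') \<longrightarrow> y = Y x'"
      if "x' \<in> ball x e" for x'
      using sol(4) that .
  qed
qed

subsection \<open>Strongly convex lower level\<close>

lemma SC_hessian_lagrangian_lower_bound:
  assumes sc: "strongly_convex \<mu> (g x)" and A: "A \<subseteq> {..<k}"
    and cvx: "\<And>i. i \<in> A \<Longrightarrow> convex_on UNIV (h i x)" and lam: "\<And>i. i \<in> A \<Longrightarrow> lam i \<ge> 0"
  shows "\<mu> * (dy \<bullet> dy) \<le> G2 (x, y) (0, dy) (0, dy) + (\<Sum>i\<in>A. lam i * H2 i (x, y) (0, dy) (0, dy))"
proof -
  have "H2 i (x, y) (0, dy) (0, dy) \<ge> 0" if i: "i \<in> A" for i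
  proof -
    have "i < k" using i A by auto
    from convex_on_second_derivative_nonneg[OF cvx[OF i] h_partial[OF this]
        second_partial_along_line[of "H1 i" "H2 i" x y dy, OF H2[OF this]]]
    show ?thesis .
  qed
  then have "(\<Sum>i\<in>A. lam i * H2 i (x, y) (0, dy) (0, dy)) \<ge> 0"
    by (intro sum_nonneg) (use lam in \<open>auto intro: mult_nonneg_nonneg\<close>)
  moreover have "G2 (x, y) (0, dy) (0, dy) - \<mu> / 2 * (dy \<bullet> dy + dy \<bullet> dy) \<ge> 0"
  proof (rule convex_on_second_derivative_nonneg[OF strongly_convex_minus_square_convex_on[OF sc]])
    show "((\<lambda>y. g x y - \<mu> / 2 * (y \<bullet> y)) has_derivative
        (\<lambda>v. G1 (x, y) (0, v) - \<mu> / 2 * (y \<bullet> v + v \<bullet> y))) (at y)" for y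
      using g_partial[of x y] by (auto intro!: derivative_eq_intros)
    have "((\<lambda>t. G1 (x, y + t *\<^sub>R dy) (0, dy) - \<mu> / 2 * (2 * (y \<bullet> dy) + t * (2 * (dy \<bullet> dy))))
        has_real_derivative G2 (x, y) (0, dy) (0, dy) - \<mu> / 2 * (0 + 1 * (2 * (dy \<bullet> dy)))) (at 0)"
      using second_partial_along_line[of G1 G2 x y dy, OF G2]
      by (intro DERIV_diff DERIV_cmult DERIV_add DERIV_const DERIV_cmult_right DERIV_ident) auto
    moreover have "(y + t *\<^sub>R dy) \<bullet> dy + dy \<bullet> (y + t *\<^sub>R dy) = 2 * (y \<bullet> dy) + t * (2 * (dy \<bullet> dy))" for t
      by (simp add: inner_add_left inner_add_right inner_commute algebra_simps)
    ultimately show "((\<lambda>t. G1 (x, y + t *\<^sub>R dy) (0, dy) - \<mu> / 2 * ((y + t *\<^sub>R dy) \<bullet> dy + dy \<bullet> (y + t *\<^sub>R dy)))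
        has_real_derivative G2 (x, y) (0, dy) (0, dy) - \<mu> / 2 * (dy \<bullet> dy + dy \<bullet> dy)) (at 0)"
      by simp
  qed
  ultimately show ?thesis by (simp add: algebra_simps)
qed

theorem SCSC_imp_grad_ystar_exists:
  assumes SC: "SC g h k X" and x: "x \<in> X" and scsc: "SCSC_point g h k x"
  shows "grad_ystar_exists g h k X x"
proof -
  obtain \<mu> where \<mu>: "\<And>x'. x' \<in> X \<Longrightarrow> strongly_convex \<mu> (g x') \<and> (\<forall>i<k. convex_on UNIV (h i x'))"
    using SC unfolding SC_def by blast
  obtain y1 where "\<forall>i<k. h i x y1 < 0" using slater_point[OF x] .
  with \<mu>[OF x] obtain y0 where "y0 \<in> Yset h k x" "\<forall>y'\<in>Yset h k x. g x y0 \<le> g x y'"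
    using strongly_convex_attains_min[OF _ g_partial continuous_on_g
        closed_Yset[of k h x, OF continuous_on_h]
        slater_point_in_Yset] by blast
  then have y0: "y0 \<in> ystar g h k x" unfolding ystar_def by blast
  let ?A = "active_set h k x y0" and ?lam = "kkt_lambda g h k x y0"
  have "dy = 0" if "G2 (x, y0) (0, dy) (0, dy) + (\<Sum>i\<in>?A. ?lam i * H2 i (x, y0) (0, dy) (0, dy)) = 0" for dy
  proof -
    have "KKT_mult g h k x y0 ?lam" using KKT_mult_kkt_lambda_ystar[OF x _ y0] \<mu>[OF x] by blast
    then have "\<And>i. i \<in> ?A \<Longrightarrow> ?lam i \<ge> 0" unfolding KKT_mult_def active_set_def by auto
    then have "\<mu> * (dy \<bullet> dy) \<le> G2 (x, y0) (0, dy) (0, dy) + (\<Sum>i\<in>?A. ?lam i * H2 i (x, y0) (0, dy) (0, dy))"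
      by (intro SC_hessian_lagrangian_lower_bound[OF _ active_set_subset]) (use \<mu>[OF x] in \<open>auto simp: active_set_def\<close>)
    with that have "\<mu> * (dy \<bullet> dy) \<le> 0" by simp
    moreover have "\<mu> > 0" using strongly_convex_pos \<mu>[OF x] by blast
    ultimately have "dy \<bullet> dy \<le> 0" by (simp add: mult_le_0_iff)
    then have "dy \<bullet> dy = 0" using inner_ge_zero[of dy] by linarith
    then show "dy = 0" by simp
  qed
  then have second_order: "\<forall>dy. (\<forall>i\<in>?A. H1 i (x, y0) (0, dy) = 0) \<longrightarrow>
      G2 (x, y0) (0, dy) (0, dy) + (\<Sum>i\<in>?A. ?lam i * H2 i (x, y0) (0, dy) (0, dy)) = 0 \<longrightarrow> dy = 0"
    by blast
  have pos: "\<forall>i\<in>?A. ?lam i > 0"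
    using scsc y0 unfolding SCSC_point_def active_set_def by blast
  have cvx: "\<forall>x'\<in>X. convex_on UNIV (g x') \<and> (\<forall>i<k. convex_on UNIV (h i x'))"
    using \<mu> strongly_convex_imp_convex_on by blast
  obtain e Y \<Lambda> where "e > 0" "Y differentiable (at x)"
    and Y: "\<And>x'. x' \<in> X \<inter> ball x e \<Longrightarrow> Y x' \<in> ystar g h k x'"
    and "\<And>x'. x' \<in> ball x e \<Longrightarrow> equality_KKT ?A x' (Y x') (\<Lambda> x') \<and> (\<forall>i\<in>?A. \<Lambda> x' i > 0)"
    and "\<And>x'. x' \<in> ball x e \<Longrightarrow> \<exists>\<epsilon>>0. \<forall>y. dist y (Y x') < \<epsilon> \<longrightarrow> equality_KKT ?A x' y (\<Lambda> x') \<longrightarrow> y = Y x'"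
    by (rule SCSC_local_solution[OF cvx x y0 pos second_order]) (rule that)
  have "ystar g h k x' = {Y x'}" if "x' \<in> X \<inter> ball x e" for x'
    using Y[OF that] strongly_convex_ystar_unique[of \<mu> g x' k h] \<mu> that by blast
  with \<open>e > 0\<close> \<open>Y differentiable (at x)\<close> show ?thesis by (rule grad_ystar_existsI)
qed

subsection \<open>Affine lower level\<close>

lemma LIN_affine_g:
  assumes "LIN g h k X" "x \<in> X"
  shows "g x y' = g x y + G1 (x, y) (0, y' - y)" and "G1 (x, y') (0, v) = G1 (x, y) (0, v)"
    and "convex_on UNIV (g x)"
proof -
  have aff: "affine_fun (g x)" using assms unfolding LIN_def by blast
  note lin = affine_fun_derivative(2)[OF aff g_partial]
  show "g x y' = g x y + G1 (x, y) (0, y' - y)" by (rule lin)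
  have "g x y' + G1 (x, y') (0, v) = g x y' + G1 (x, y) (0, v)"
    using lin[where y = y' and y' = "y' + v"] lin[where y = y and y' = "y' + v"] lin[where y = y and y' = y']
      linear_diff[OF linear_blinfun_partial, of "G1 (x, y)" "y' + v - y" "y' - y"]
        by (simp add: algebra_simps)
  then show "G1 (x, y') (0, v) = G1 (x, y) (0, v)" by simp
  show "convex_on UNIV (g x)" by (rule affine_fun_convex_on[OF aff])
qed

lemma LIN_affine_h:
  assumes "LIN g h k X" "x \<in> X" "i < k"
  shows "h i x y' = h i x y + H1 i (x, y) (0, y' - y)" and "H1 i (x, y') (0, v) = H1 i (x, y) (0, v)"
    and "convex_on UNIV (h i x)"
proof -
  have aff: "affine_fun (h i x)" using assms unfolding LIN_def by blast
  note lin = affine_fun_derivative(2)[OF aff h_partial[OF assms(3)]]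
  show "h i x y' = h i x y + H1 i (x, y) (0, y' - y)" by (rule lin)
  have "h i x y' + H1 i (x, y') (0, v) = h i x y' + H1 i (x, y) (0, v)"
    using lin[where y = y' and y' = "y' + v"] lin[where y = y and y' = "y' + v"] lin[where y = y and y' = y']
      linear_diff[OF linear_blinfun_partial, of "H1 i (x, y)" "y' + v - y" "y' - y"]
        by (simp add: algebra_simps)
  then show "H1 i (x, y') (0, v) = H1 i (x, y) (0, v)" by simp
  show "convex_on UNIV (h i x)" by (rule affine_fun_convex_on[OF aff])
qed

lemma LIN_along_line:
  assumes "LIN g h k X" "x \<in> X"
  shows "g x (y + t *\<^sub>R d) = g x y + t * G1 (x, y) (0, d)"
    and "i < k \<Longrightarrow> h i x (y + t *\<^sub>R d) = h i x y + t * H1 i (x, y) (0, d)"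
  using LIN_affine_g(1)[OF assms, where y' = "y + t *\<^sub>R d" and y = y]
    LIN_affine_h(1)[OF assms, where i = i and y' = "y + t *\<^sub>R d" and y = y]
  by (simp_all add: blinfun_apply_Pair_zero_scaleR)

lemma LIN_ystar_ray:
  assumes LIN: "LIN g h k X" and x: "x \<in> X" and y: "y \<in> ystar g h k x"
    and u_act: "\<forall>i\<in>active_set h k x y. H1 i (x, y) (0, u) \<le> 0" and u_g: "G1 (x, y) (0, u) \<le> 0"
  obtains t where "t > 0" "y + t *\<^sub>R u \<in> ystar g h k x"
proof -
  have feas: "\<And>i. i < k \<Longrightarrow> h i x y \<le> 0" and opt: "\<And>y'. y' \<in> Yset h k x \<Longrightarrow> g x y \<le> g x y'"
    using y unfolding ystar_def Yset_def by auto
  have "\<forall>i\<in>{..<k} - active_set h k x y. eventually (\<lambda>t. h i x y + t * H1 i (x, y) (0, u) < 0) (at_right 0)"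
  proof
    fix i assume "i \<in> {..<k} - active_set h k x y"
    then have "i < k" "h i x y \<noteq> 0" unfolding active_set_def by auto
    then have "h i x y < 0" using feas by (simp add: less_le)
    moreover have "((\<lambda>t. h i x y + t * H1 i (x, y) (0, u)) \<longlongrightarrow> h i x y + 0 * H1 i (x, y) (0, u)) (at_right 0)"
      by (intro tendsto_intros)
    ultimately show "eventually (\<lambda>t. h i x y + t * H1 i (x, y) (0, u) < 0) (at_right 0)"
      using order_tendstoD(2) by fastforce
  qed
  then have "eventually (\<lambda>t. \<forall>i\<in>{..<k} - active_set h k x y. h i x y + t * H1 i (x, y) (0, u) < 0)
      (at_right 0)"
    by (rule eventually_ball_finite[rotated]) simp
  then have "eventually (\<lambda>t. 0 < t \<and>
      (\<forall>i\<in>{..<k} - active_set h k x y. h i x y + t * H1 i (x, y) (0, u) < 0)) (at_right 0)"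
    by (intro eventually_conj eventually_at_right_less)
  then obtain t where t: "t > 0"
    and inactive: "\<forall>i\<in>{..<k} - active_set h k x y. h i x y + t * H1 i (x, y) (0, u) < 0"
    using eventually_happens'[OF trivial_limit_at_right_real] by blast
  have "h i x (y + t *\<^sub>R u) \<le> 0" if i: "i < k" for i
  proof (cases "i \<in> active_set h k x y")
    case True
    then show ?thesis using LIN_along_line(2)[OF LIN x i] u_act True t
      by (simp add: active_set_def mult_nonneg_nonpos)
  next
    case False
    then show ?thesis using LIN_along_line(2)[OF LIN x i] inactive i by force
  qed
  then have "y + t *\<^sub>R u \<in> Yset h k x" unfolding Yset_def by blast
  moreover have "g x (y + t *\<^sub>R u) \<le> g x y"
    using LIN_along_line(1)[OF LIN x] u_g t by (simp add: mult_nonneg_nonpos)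
  ultimately have "y + t *\<^sub>R u \<in> ystar g h k x" using opt unfolding ystar_def by force
  with t that show ?thesis by blast
qed

lemma LIN_unique_imp_SCSC:
  assumes LIN: "LIN g h k X" and x: "x \<in> X" and unique: "ystar g h k x = {y0}"
  shows "SCSC_point g h k x"
  unfolding SCSC_point_def
proof (intro ballI allI impI)
  fix y i assume y: "y \<in> ystar g h k x" and "i < k" "h i x y = 0"
  then have i: "i \<in> active_set h k x y" unfolding active_set_def by simp
  let ?A = "active_set h k x y" and ?lam = "kkt_lambda g h k x y"
  let ?a = "\<lambda>j. partial_grad (H1 j (x, y))"
  have "KKT_mult g h k x y ?lam"
    using KKT_mult_kkt_lambda_ystar[OF x _ y] LIN_affine_h(3)[OF LIN x] by blast
  then have lam: "\<And>j. j \<in> ?A \<Longrightarrow> ?lam j \<ge> 0" and kkt: "equality_KKT ?A x y ?lam"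
    using KKT_mult_imp_equality_KKT unfolding KKT_mult_def active_set_def by simp_all
  show "?lam i > 0"
  proof (rule ccontr)
    assume "\<not> ?lam i > 0"
    with lam[OF i] have lam_i: "?lam i = 0" by simp
    have "independent_family ?A ?a" using A3 x y unfolding A3_def LICQ_iff by blast
    then obtain d where d: "?a i \<bullet> d = 1" "\<And>j. j \<in> ?A - {i} \<Longrightarrow> ?a j \<bullet> d = 0"
      using independent_family_dual_vector[OF finite_active_set i] by blast
    have neg: "H1 j (x, y) (0, - d) = - (?a j \<bullet> d)" for j
      by (simp add: blinfun_apply_Pair_zero_uminus inner_partial_grad)
    have "\<forall>j\<in>?A. H1 j (x, y) (0, - d) \<le> 0"
    proof
      fix j assume "j \<in> ?A"
      then show "H1 j (x, y) (0, - d) \<le> 0" using d by (cases "j = i") (auto simp: neg)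
    qed
    moreover have "G1 (x, y) (0, - d) \<le> 0"
    proof -
      have "(\<Sum>j\<in>?A. ?lam j * H1 j (x, y) (0, - d)) = 0"
        using d lam_i by (intro sum.neutral) (auto simp: neg)
      moreover have "G1 (x, y) (0, - d) + (\<Sum>j\<in>?A. ?lam j * H1 j (x, y) (0, - d)) = 0"
        using kkt unfolding equality_KKT_def by blast
      ultimately show ?thesis by simp
    qed
    ultimately obtain t where "t > 0" "y + t *\<^sub>R (- d) \<in> ystar g h k x"
      by (rule LIN_ystar_ray[OF LIN x y])
    then have "d = 0" using unique y by simp
    then show False using d(1) by simp
  qed
qed

lemma LIN_equality_KKT_face:
  assumes LIN: "LIN g h k X" and x: "x \<in> X" and A: "A \<subseteq> {..<k}"
    and kkt: "equality_KKT A x z lam" and lam: "\<forall>j\<in>A. lam j \<ge> 0"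
    and y: "y \<in> Yset h k x" "g x y \<le> g x z" and i: "i \<in> A" "lam i > 0"
  shows "H1 i (x, z) (0, y - z) = 0"
proof -
  have finA: "finite A" using A finite_subset by blast
  have hy: "h j x y = H1 j (x, z) (0, y - z)" if j: "j \<in> A" for j
  proof -
    have "j < k" "h j x z = 0" using j A kkt unfolding equality_KKT_def by auto
    then show ?thesis using LIN_affine_h(1)[OF LIN x \<open>j < k\<close>, where y' = y and y = z] by simp
  qed
  have nonneg: "0 \<le> - (lam j * h j x y)" if j: "j \<in> A" for j
  proof -
    have "h j x y \<le> 0" using y(1) j A unfolding Yset_def by auto
    then show ?thesis using lam j by (simp add: mult_nonneg_nonpos)
  qed
  have "G1 (x, z) (0, y - z) + (\<Sum>j\<in>A. lam j * H1 j (x, z) (0, y - z)) = 0"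
    using kkt unfolding equality_KKT_def by blast
  moreover have "(\<Sum>j\<in>A. lam j * H1 j (x, z) (0, y - z)) = (\<Sum>j\<in>A. lam j * h j x y)"
    by (rule sum.cong) (simp_all add: hy)
  moreover have "g x y = g x z + G1 (x, z) (0, y - z)" by (rule LIN_affine_g(1)[OF LIN x])
  ultimately have "(\<Sum>j\<in>A. - (lam j * h j x y)) \<le> 0" using y(2) by (simp add: sum_negf)
  moreover have "0 \<le> (\<Sum>j\<in>A. - (lam j * h j x y))" by (rule sum_nonneg) (rule nonneg)
  moreover have "(\<Sum>j\<in>A. - (lam j * h j x y)) = 0 \<longleftrightarrow> (\<forall>j\<in>A. - (lam j * h j x y) = 0)"
    by (rule sum_nonneg_eq_0_iff[OF finA]) (rule nonneg)
  ultimately have "- (lam i * h i x y) = 0" using i(1) by auto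
  then show ?thesis using i hy by simp
qed

lemma LIN_ystar_face:
  assumes LIN: "LIN g h k X" and x: "x \<in> X" and z: "z \<in> ystar g h k x" and y: "y \<in> ystar g h k x"
    and i: "i \<in> active_set h k x z" "kkt_lambda g h k x z i > 0"
  shows "H1 i (x, z) (0, y - z) = 0"
proof -
  let ?lam = "kkt_lambda g h k x z"
  have K: "KKT_mult g h k x z ?lam"
    using KKT_mult_kkt_lambda_ystar[OF x _ z] LIN_affine_h(3)[OF LIN x] by blast
  then have "\<forall>j\<in>active_set h k x z. ?lam j \<ge> 0" unfolding KKT_mult_def active_set_def by simp
  moreover have "y \<in> Yset h k x" "g x y \<le> g x z" using y z unfolding ystar_def by auto
  ultimately show ?thesis
    using LIN_equality_KKT_face[OF LIN x active_set_subset KKT_mult_imp_equality_KKT[OF K]] i by blast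
qed

lemma LIN_ray_exit:
  assumes LIN: "LIN g h k X" and x: "x \<in> X" and y0: "y0 \<in> Yset h k x" and d: "d \<noteq> 0"
  obtains T j where "T \<ge> 0" "j < k" "H1 j (x, y0) (0, d) > 0"
    "y0 + T *\<^sub>R d \<in> Yset h k x" "h j x (y0 + T *\<^sub>R d) = 0"
proof -
  define c where "c j = H1 j (x, y0) (0, d)" for j
  have line: "h j x (y0 + t *\<^sub>R d) = h j x y0 + t * c j" if "j < k" for j t
    unfolding c_def by (rule LIN_along_line(2)[OF LIN x that])
  have feas: "\<And>j. j < k \<Longrightarrow> h j x y0 \<le> 0" using y0 unfolding Yset_def by auto
  define J where "J = {j. j < k \<and> c j > 0}"
  have "J \<noteq> {}"
  proof
    assume "J = {}"
    then have "y0 + t *\<^sub>R d \<in> Yset h k x" if "t \<ge> 0" for t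
      using that feas line unfolding Yset_def J_def
      by (auto intro!: add_nonpos_nonpos mult_nonneg_nonpos)
    moreover have "bounded (Yset h k x)" using LIN x compact_imp_bounded unfolding LIN_def by blast
    ultimately show False using bounded_ray_imp_zero d by blast
  qed
  define r where "r j = - h j x y0 / c j" for j
  have finJ: "finite J" unfolding J_def by simp
  have "Min (r ` J) \<in> r ` J" using finJ \<open>J \<noteq> {}\<close> by simp
  then obtain j where j: "j \<in> J" "r j = Min (r ` J)" by (metis imageE)
  have c_j: "j < k" "c j > 0" using j(1) unfolding J_def by auto
  define T where "T = r j"
  have r_min: "T \<le> r j'" if "j' \<in> J" for j' unfolding T_def j(2) using finJ that by simp
  have "T \<ge> 0" using feas[OF c_j(1)] c_j unfolding T_def r_def by (simp add: divide_nonpos_pos)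
  have "h j' x (y0 + T *\<^sub>R d) \<le> 0" if "j' < k" for j'
  proof (cases "j' \<in> J")
    case True
    then have "c j' > 0" unfolding J_def by simp
    then have "T * c j' \<le> r j' * c j'" using r_min[OF True] by (simp add: mult_right_mono)
    then show ?thesis using line[OF that] \<open>c j' > 0\<close> unfolding r_def by simp
  next
    case False
    then have "T * c j' \<le> 0" using \<open>T \<ge> 0\<close> that unfolding J_def by (simp add: mult_nonneg_nonpos)
    then show ?thesis using line[OF that] feas[OF that] by simp
  qed
  then have "y0 + T *\<^sub>R d \<in> Yset h k x" unfolding Yset_def by blast
  moreover have "h j x (y0 + T *\<^sub>R d) = h j x y0 + T * c j" by (rule line[OF c_j(1)])
  then have "h j x (y0 + T *\<^sub>R d) = 0" using c_j(2) unfolding T_def r_def by simp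
  ultimately show ?thesis using that \<open>T \<ge> 0\<close> c_j unfolding c_def by blast
qed

lemma LIN_SCSC_imp_unique:
  assumes LIN: "LIN g h k X" and x: "x \<in> X" and scsc: "SCSC_point g h k x"
    and y0: "y0 \<in> ystar g h k x" and y1: "y1 \<in> ystar g h k x"
  shows "y1 = y0"
proof (rule ccontr)
  assume "y1 \<noteq> y0"
  define d where "d = y1 - y0"
  have "d \<noteq> 0" using \<open>y1 \<noteq> y0\<close> unfolding d_def by simp
  from LIN_ray_exit[OF LIN x _ this] y0 obtain T j where T: "T \<ge> 0" "j < k" "H1 j (x, y0) (0, d) > 0"
    "y0 + T *\<^sub>R d \<in> Yset h k x" "h j x (y0 + T *\<^sub>R d) = 0"
    unfolding ystar_def by blast
  define z where "z = y0 + T *\<^sub>R d"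
  have "g x y1 = g x y0" using y0 y1 unfolding ystar_def by (auto intro: order_antisym)
  then have "G1 (x, y0) (0, d) = 0" using LIN_affine_g(1)[OF LIN x, where y' = y1 and y = y0] unfolding d_def
    by simp
  then have "g x z = g x y0" unfolding z_def using LIN_along_line(1)[OF LIN x] by simp
  then have z: "z \<in> ystar g h k x" using T(4) y0 unfolding z_def ystar_def by auto
  have j: "j \<in> active_set h k x z" "kkt_lambda g h k x z j > 0"
    using T(2,5) scsc z unfolding z_def SCSC_point_def active_set_def by auto
  have face: "H1 j (x, y0) (0, y - z) = 0" if "y \<in> ystar g h k x" for y
    using LIN_ystar_face[OF LIN x z that j] LIN_affine_h(2)[OF LIN x T(2), where y' = z and y = y0] by simp
  have "y0 - z = (- T) *\<^sub>R d" "y1 - z = (1 - T) *\<^sub>R d" unfolding z_def d_def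
    by (simp_all add: algebra_simps)
  then have "H1 j (x, y0) (0, (- T) *\<^sub>R d) = 0" "H1 j (x, y0) (0, (1 - T) *\<^sub>R d) = 0"
    using face[OF y0] face[OF y1] by simp_all
  then have "T * H1 j (x, y0) (0, d) = 0" "(1 - T) * H1 j (x, y0) (0, d) = 0"
    by (simp_all only: blinfun_apply_Pair_zero_scaleR)
  then show False using T(3) by simp
qed

lemma LIN_equality_KKT_translate:
  assumes LIN: "LIN g h k X" and x: "x \<in> X" and A: "A \<subseteq> {..<k}"
    and kkt: "equality_KKT A x z lam" and d: "\<And>i. i \<in> A \<Longrightarrow> H1 i (x, z) (0, d) = 0"
  shows "equality_KKT A x (z + d) lam"
proof -
  have "(\<Sum>i\<in>A. lam i * H1 i (x, z + d) (0, v)) = (\<Sum>i\<in>A. lam i * H1 i (x, z) (0, v))" for v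
    using LIN_affine_h(2)[OF LIN x, where y' = "z + d" and y = z] A by (intro sum.cong) auto
  moreover have "\<forall>i\<in>A. h i x (z + d) = 0"
    using LIN_affine_h(1)[OF LIN x, where y' = "z + d" and y = z] kkt d A unfolding equality_KKT_def by auto
  ultimately show ?thesis using kkt LIN_affine_g(2)[OF LIN x, where y' = "z + d" and y = z]
    unfolding equality_KKT_def by simp
qed

lemma LIN_unique_imp_no_tangent:
  assumes LIN: "LIN g h k X" and x: "x \<in> X" and unique: "ystar g h k x = {y0}"
    and tangent: "\<forall>i\<in>active_set h k x y0. H1 i (x, y0) (0, dy) = 0"
  shows "dy = 0"
proof -
  define u where "u = (if G1 (x, y0) (0, dy) \<le> 0 then dy else - dy)"
  have "\<forall>i\<in>active_set h k x y0. H1 i (x, y0) (0, u) \<le> 0" "G1 (x, y0) (0, u) \<le> 0"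
    using tangent unfolding u_def by (auto simp: blinfun_apply_Pair_zero_uminus)
  moreover have "y0 \<in> ystar g h k x" using unique by simp
  ultimately obtain t where "t > 0" "y0 + t *\<^sub>R u \<in> ystar g h k x"
    using LIN_ystar_ray[OF LIN x] by blast
  then have "u = 0" using unique by simp
  then show "dy = 0" unfolding u_def by (auto split: if_splits)
qed

text \<open>All solutions lie on the face cut out by the active constraints, and the KKT system keeps
  holding along that face.\<close>

lemma LIN_isolated_KKT_point_unique:
  assumes LIN: "LIN g h k X" and x: "x \<in> X" and A: "A \<subseteq> {..<k}"
    and kkt: "equality_KKT A x z lam" and pos: "\<forall>i\<in>A. lam i > 0" and z: "z \<in> ystar g h k x"
    and isolated: "\<exists>\<epsilon>>0. \<forall>y. dist y z < \<epsilon> \<longrightarrow> equality_KKT A x y lam \<longrightarrow> y = z"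
    and y: "y \<in> ystar g h k x"
  shows "y = z"
proof -
  obtain \<epsilon> where "\<epsilon> > 0" and \<epsilon>: "\<And>y. dist y z < \<epsilon> \<Longrightarrow> equality_KKT A x y lam \<Longrightarrow> y = z"
    using isolated by blast
  define d where "d = y - z"
  have "y \<in> Yset h k x" "g x y \<le> g x z" using y z unfolding ystar_def by auto
  then have "H1 i (x, z) (0, d) = 0" if "i \<in> A" for i
    unfolding d_def using pos that
    by (intro LIN_equality_KKT_face[OF LIN x A kkt]) (auto simp: less_imp_le)
  then have translate: "equality_KKT A x (z + s *\<^sub>R d) lam" for s
    by (intro LIN_equality_KKT_translate[OF LIN x A kkt]) (simp add: blinfun_apply_Pair_zero_scaleR)
  have "norm d + 1 > 0" by (simp add: add_nonneg_pos)
  define s where "s = \<epsilon> / (2 * (norm d + 1))"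
  have "s > 0" unfolding s_def using \<open>\<epsilon> > 0\<close> \<open>norm d + 1 > 0\<close> by simp
  have "s * norm d \<le> s * (norm d + 1)" using \<open>s > 0\<close> by simp
  also have "\<dots> = \<epsilon> / 2" unfolding s_def using \<open>norm d + 1 > 0\<close> by (simp add: field_simps)
  finally have "dist (z + s *\<^sub>R d) z < \<epsilon>" using \<open>\<epsilon> > 0\<close> \<open>s > 0\<close> by (simp add: dist_norm)
  with \<epsilon> translate have "z + s *\<^sub>R d = z" by blast
  then show "y = z" using \<open>s > 0\<close> unfolding d_def by simp
qed

lemma LIN_unique_imp_grad_ystar_exists:
  assumes LIN: "LIN g h k X" and x: "x \<in> X" and unique: "ystar g h k x = {y0}"
  shows "grad_ystar_exists g h k X x"
proof -
  let ?A = "active_set h k x y0"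
  have y0: "y0 \<in> ystar g h k x" using unique by simp
  have cvx: "\<forall>x'\<in>X. convex_on UNIV (g x') \<and> (\<forall>i<k. convex_on UNIV (h i x'))"
    using LIN_affine_g(3)[OF LIN] LIN_affine_h(3)[OF LIN] by blast
  have pos: "\<forall>i\<in>?A. kkt_lambda g h k x y0 i > 0"
    using LIN_unique_imp_SCSC[OF LIN x unique] y0 unfolding SCSC_point_def active_set_def by blast
  have second_order: "\<forall>dy. (\<forall>i\<in>?A. H1 i (x, y0) (0, dy) = 0) \<longrightarrow>
      G2 (x, y0) (0, dy) (0, dy) + (\<Sum>i\<in>?A. kkt_lambda g h k x y0 i * H2 i (x, y0) (0, dy) (0, dy)) = 0 \<longrightarrow> dy = 0"
    using LIN_unique_imp_no_tangent[OF LIN x unique] by blast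
  obtain e Y \<Lambda> where "e > 0" "Y differentiable (at x)"
    and Y: "\<And>x'. x' \<in> X \<inter> ball x e \<Longrightarrow> Y x' \<in> ystar g h k x'"
    and kkt: "\<And>x'. x' \<in> ball x e \<Longrightarrow> equality_KKT ?A x' (Y x') (\<Lambda> x') \<and> (\<forall>i\<in>?A. \<Lambda> x' i > 0)"
    and isolated: "\<And>x'. x' \<in> ball x e \<Longrightarrow>
      \<exists>\<epsilon>>0. \<forall>y. dist y (Y x') < \<epsilon> \<longrightarrow> equality_KKT ?A x' y (\<Lambda> x') \<longrightarrow> y = Y x'"
    by (rule SCSC_local_solution[OF cvx x y0 pos second_order]) (rule that)
  have "ystar g h k x' = {Y x'}" if x': "x' \<in> X \<inter> ball x e" for x'
    using LIN_isolated_KKT_point_unique[OF LIN _ active_set_subset _ _ Y[OF x'] isolated] kkt x' Y[OF x']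
    by blast
  with \<open>e > 0\<close> \<open>Y differentiable (at x)\<close> show ?thesis by (rule grad_ystar_existsI)
qed

lemma LIN_ystar_nonempty:
  assumes LIN: "LIN g h k X" and x: "x \<in> X"
  obtains y0 where "y0 \<in> ystar g h k x"
proof -
  obtain y1 where "\<forall>i<k. h i x y1 < 0" using slater_point[OF x] .
  then have "y1 \<in> Yset h k x" by (rule slater_point_in_Yset)
  moreover have "compact (Yset h k x)" using LIN x unfolding LIN_def by blast
  ultimately obtain y0 where "y0 \<in> Yset h k x" "\<forall>y'\<in>Yset h k x. g x y0 \<le> g x y'"
    using continuous_attains_inf[OF _ _ continuous_on_subset[OF continuous_on_g]] by blast
  then show ?thesis using that unfolding ystar_def by blast
qed

theorem LIN_SCSC_iff_unique:
  assumes "LIN g h k X" "x \<in> X"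
  shows "SCSC_point g h k x \<longleftrightarrow> (\<exists>y. ystar g h k x = {y})"
proof
  assume scsc: "SCSC_point g h k x"
  obtain y0 where "y0 \<in> ystar g h k x" using LIN_ystar_nonempty[OF assms] .
  then have "ystar g h k x = {y0}" using LIN_SCSC_imp_unique[OF assms scsc] by blast
  then show "\<exists>y. ystar g h k x = {y}" ..
next
  assume "\<exists>y. ystar g h k x = {y}"
  then show "SCSC_point g h k x" using LIN_unique_imp_SCSC[OF assms] by blast
qed

theorem LIN_unique_iff_grad_ystar_exists:
  assumes "LIN g h k X" "x \<in> X"
  shows "(\<exists>y. ystar g h k x = {y}) \<longleftrightarrow> grad_ystar_exists g h k X x"
  using LIN_unique_imp_grad_ystar_exists[OF assms] grad_ystar_exists_imp_singleton[OF assms(2)] by blast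

end

lemma C1_fun_zero: "C1_fun (\<lambda>z::'p::euclidean_space. 0)"
  unfolding C1_fun_def by (intro exI[of _ "\<lambda>z. 0"]) (simp add: zero_blinfun.rep_eq[abs_def])

lemma C2_fun_snd_square: "C2_fun (\<lambda>z::real \<times> real. snd z * snd z)"
proof -
  define S :: "(real \<times> real) \<Rightarrow>\<^sub>L real" where "S = Blinfun snd"
  have S: "blinfun_apply S = snd" unfolding S_def using bounded_linear_snd bounded_linear_Blinfun_apply
    by auto
  have "bounded_linear (\<lambda>u::real \<times> real. (2 * snd u) *\<^sub>R S)"
    by (intro bounded_linear_compose[OF bounded_linear_scaleR_left]
        bounded_linear_compose[OF bounded_linear_mult_right bounded_linear_snd])
  then have "((\<lambda>z. (2 * snd z) *\<^sub>R S) has_derivative blinfun_apply (Blinfun (\<lambda>u. (2 * snd u) *\<^sub>R S))) (at z)"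
    for z :: "real \<times> real"
    by (simp add: bounded_linear_imp_has_derivative bounded_linear_Blinfun_apply)
  moreover have "((\<lambda>z::real \<times> real. snd z * snd z) has_derivative blinfun_apply ((2 * snd z) *\<^sub>R S)) (at z)" for z
  proof -
    have "((\<lambda>z::real \<times> real. snd z * snd z) has_derivative (\<lambda>u. snd z * snd u + snd u * snd z)) (at z)"
      by (auto intro!: derivative_eq_intros)
    moreover have "(\<lambda>u. snd z * snd u + snd u * snd z) = blinfun_apply ((2 * snd z) *\<^sub>R S)"
      by (auto simp: S fun_eq_iff scaleR_blinfun.rep_eq)
    ultimately show ?thesis by simp
  qed
  ultimately show ?thesis
    unfolding C2_fun_def
    by (intro exI[of _ "\<lambda>z. (2 * snd z) *\<^sub>R S"] exI[of _ "\<lambda>z. Blinfun (\<lambda>u. (2 * snd u) *\<^sub>R S)"]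
        conjI allI) auto
qed

lemma C2_fun_uminus_snd: "C2_fun (\<lambda>z::real \<times> real. - snd z)"
  unfolding C2_fun_def
proof (intro exI[of _ "\<lambda>z. - Blinfun snd"] exI[of _ "\<lambda>z. 0"] conjI allI)
  fix z :: "real \<times> real"
  have "blinfun_apply (Blinfun snd) = (snd :: real \<times> real \<Rightarrow> real)"
    using bounded_linear_snd bounded_linear_Blinfun_apply by auto
  then show "((\<lambda>z. - snd z) has_derivative blinfun_apply (- Blinfun snd)) (at z)"
    by (auto simp: uminus_blinfun.rep_eq intro!: derivative_eq_intros)
  show "((\<lambda>z. - Blinfun snd) has_derivative blinfun_apply 0) (at z)"
    by (simp add: zero_blinfun.rep_eq[abs_def])
qed simp

lemma strongly_convex_square: "strongly_convex 2 (\<lambda>y::real. y * y)"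
  unfolding strongly_convex_def
proof (intro conjI allI impI)
  fix a b t :: real
  have "(t * a + (1 - t) * b) * (t * a + (1 - t) * b) =
      t * (a * a) + (1 - t) * (b * b) - t * (1 - t) * ((a - b) * (a - b))"
    by algebra
  then show "(t *\<^sub>R a + (1 - t) *\<^sub>R b) * (t *\<^sub>R a + (1 - t) *\<^sub>R b)
      \<le> t * (a * a) + (1 - t) * (b * b) - 2 / 2 * t * (1 - t) * (norm (a - b))\<^sup>2"
    by (simp add: power2_eq_square)
qed simp

text \<open>The converse of \<open>SCSC_imp_grad_ystar_exists\<close> fails already for \<open>min y\<^sup>2\<close> subject to
  \<open>y \<ge> 0\<close>: the solution \<open>y = 0\<close> does not depend on \<open>x\<close>, but the multiplier of the active
  constraint is \<open>0\<close>.\<close>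

lemma SCSC_not_necessary:
  "\<exists>(f0::real \<Rightarrow> real \<Rightarrow> real) (g0::real \<Rightarrow> real \<Rightarrow> real) (h0::nat \<Rightarrow> real \<Rightarrow> real \<Rightarrow> real)
     (k0::nat) (X0::real set) (x0::real).
     A1 f0 g0 h0 k0 \<and> A2 h0 k0 X0 \<and> A3 g0 h0 k0 X0 \<and> SC g0 h0 k0 X0 \<and> x0 \<in> X0 \<and>
     grad_ystar_exists g0 h0 k0 X0 x0 \<and> \<not> SCSC_point g0 h0 k0 x0"
proof -
  define f0 :: "real \<Rightarrow> real \<Rightarrow> real" where "f0 x y = 0" for x y
  define g0 :: "real \<Rightarrow> real \<Rightarrow> real" where "g0 x y = y * y" for x y
  define h0 :: "nat \<Rightarrow> real \<Rightarrow> real \<Rightarrow> real" where "h0 i x y = - y" for i x y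
  have "case_prod f0 = (\<lambda>z. 0)" "case_prod g0 = (\<lambda>z. snd z * snd z)" "case_prod (h0 i) = (\<lambda>z. - snd z)" for i
    unfolding f0_def g0_def h0_def by (auto simp: fun_eq_iff)
  then have "C1_fun (case_prod f0)" "C2_fun (case_prod g0)" "\<forall>i<1. C2_fun (case_prod (h0 i))"
    using C1_fun_zero C2_fun_snd_square C2_fun_uminus_snd by simp_all
  then have A1: "A1 f0 g0 h0 1" unfolding A1_def by blast
  have Yset: "Yset h0 1 x = {y. y \<ge> 0}" for x unfolding Yset_def h0_def by auto
  have ystar: "ystar g0 h0 1 x = {0}" for x
    unfolding ystar_def Yset g0_def by (auto intro: antisym simp: mult_le_0_iff)
  have frechet_h0: "frechet_derivative (h0 i x) (at y) = (\<lambda>v. - v)" for i x y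
    using frechet_derivative_at[of "h0 i x" "\<lambda>v. - v" y] unfolding h0_def
    by (auto intro!: derivative_eq_intros)
  have LICQ: "LICQ h0 1 x 0" for x
  proof -
    have "{i. i < (1::nat) \<and> h0 i x 0 = 0} = {0}" unfolding h0_def by auto
    then show ?thesis unfolding LICQ_def by (auto simp: frechet_h0 dest: spec[of _ 1])
  qed
  have SC: "SC g0 h0 1 {0}"
    unfolding SC_def
  proof (intro exI[of _ 2] ballI conjI allI impI)
    show "strongly_convex 2 (g0 x)" for x
      unfolding g0_def by (rule strongly_convex_square)
    show "convex_on UNIV (h0 i x)" for i x
      unfolding h0_def by (rule convex_onI) (simp_all add: algebra_simps)
  qed
  have "kkt_lambda g0 h0 1 0 0 = (\<lambda>_. 0)"
  proof -
    have "(g0 0 has_derivative (\<lambda>v. 0 * v + v * 0)) (at 0)"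
      unfolding g0_def by (auto intro!: derivative_eq_intros)
    from frechet_derivative_at[OF this] have "frechet_derivative (g0 0) (at 0) = (\<lambda>v. 0)" by simp
    then have "KKT_mult g0 h0 1 0 0 (\<lambda>_. 0)" unfolding KKT_mult_def by simp
    then show ?thesis using KKT_mult_unique[OF LICQ KKT_mult_kkt_lambda[OF LICQ]] by blast
  qed
  then have "\<not> SCSC_point g0 h0 1 0" unfolding SCSC_point_def ystar h0_def by auto
  moreover have "grad_ystar_exists g0 h0 1 {0} 0"
    using ystar by (intro grad_ystar_existsI[of 1 "\<lambda>_. 0"]) auto
  moreover have "A2 h0 1 {0}" unfolding A2_def h0_def by (auto intro!: exI[of _ 1])
  moreover have "A3 g0 h0 1 {0}" unfolding A3_def using LICQ ystar by auto
  ultimately show ?thesis using A1 SC by blast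
qed

theorem proposition2:
  fixes f g :: "'a::euclidean_space \<Rightarrow> 'b::euclidean_space \<Rightarrow> real"
    and h :: "nat \<Rightarrow> 'a \<Rightarrow> 'b \<Rightarrow> real" and k :: nat and X :: "'a set" and x :: 'a
  assumes "A1 f g h k" and "A2 h k X" and "A3 g h k X" and "x \<in> X"
  shows "(SC g h k X \<longrightarrow> SCSC_point g h k x \<longrightarrow> grad_ystar_exists g h k X x)
    \<and> (\<exists>(f0::real \<Rightarrow> real \<Rightarrow> real) (g0::real \<Rightarrow> real \<Rightarrow> real) (h0::nat \<Rightarrow> real \<Rightarrow> real \<Rightarrow> real)
         (k0::nat) (X0::real set) (x0::real).
         A1 f0 g0 h0 k0 \<and> A2 h0 k0 X0 \<and> A3 g0 h0 k0 X0 \<and> SC g0 h0 k0 X0 \<and> x0 \<in> X0 \<and>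
         grad_ystar_exists g0 h0 k0 X0 x0 \<and> \<not> SCSC_point g0 h0 k0 x0)
    \<and> (LIN g h k X \<longrightarrow>
         (SCSC_point g h k x \<longleftrightarrow> (\<exists>y. ystar g h k x = {y})) \<and>
         ((\<exists>y. ystar g h k x = {y}) \<longleftrightarrow> grad_ystar_exists g h k X x))"
proof -
  obtain G1 G2 H1 H2 where "lower_level g h k X G1 G2 H1 H2"
    using lower_levelI[OF assms(1-3)] .
  then interpret lower_level g h k X G1 G2 H1 H2 .
  show ?thesis
    using SCSC_imp_grad_ystar_exists[OF _ assms(4)] SCSC_not_necessary
      LIN_SCSC_iff_unique[OF _ assms(4)] LIN_unique_iff_grad_ystar_exists[OF _ assms(4)]
    by blast
qed

end
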